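(* Let $T_0$ be an IET satisfying the BC Condition and let $\omega\in E_{cs}(T_0)$. Then for every $x\in[0,1]$ there exists a sequence $(m_k)_{k\in\mathbb Z}$ of integers with $|m_k|\to\infty$ as $|k|\to\infty$ such that $$\sup_{k\in\mathbb Z}\big|S^{T_0}_{m_k}f_{T_0,\omega}(x)\big|<+\infty.$$
   Context: IETs are on $[0,1)$ with $d\ge 2$ intervals $I_\alpha$ labelled by $\mathcal A$. For $\omega\in\mathbb R^{\mathcal A}$, let $f_{T_0,\omega}(x)=\omega_\alpha$ for $x\in I_\alpha$. Birkhoff sums are defined by - $S_nf=\sum_{j=0}^{n-1}f\circ T_0^j$ for $n>0$, - $S_0f=0$, - $S_nf=\sum_{j=n}^{-1}f\circ T_0^{j}$ for $n<0$. Rauzy–Veech/Zorich induction gives nested intervals $I^{(n)}$, return times $q^{(n)}_\alpha$ and incidence (height cocycle) matrices $Z_{m,n}\in SL(d,\mathbb Z)$. Here $(Z_{m,n})_{\alpha\beta}$ counts the visits to $I^{(m)}_\beta$ of an orbit starting in $I^{(n)}_\alpha$ before it returns to $I^{(n)}$. $E_s(T_0)\subset E_{cs}(T_0)$ are the Oseledets subspaces of negative, respectively nonpositive, Lyapunov exponents of $Z$ over the Zorich map. $\gamma(T_0)$ is $\infty$-complete if each symbol is a winner infinitely often in the Rauzy path. BC Condition: $T_0$ satisfies Keane's condition, is Oseledets generic, $\gamma(T_0)$ is $\infty$-complete, and there is a sequence $(n_k)$ such that: (i) there exist $N\in\mathbb N$ and $K>0$ with $1\le (Z_{n_k,n_k+N})_{\alpha\beta}\le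 K$ for all $\alpha,\beta$ and all $k$; (ii) there exists $V>0$ with $\|Z_{0,n_k}|_{E_{cs}(T_0)}\|\le V$ for all $k$. *)

theory Defs
  imports "HOL-Analysis.Analysis"
begin

text \<open>Combinatorial/length data of an IET on an alphabet 'a (finite type).
  pt, pb : positions of the symbols in the top / bottom row (0-based),
  lam : lengths.  The IET lives on [0, sum lam).\<close>

type_synonym ('a) iet_data = "('a \<Rightarrow> nat) \<times> ('a \<Rightarrow> nat) \<times> ('a \<Rightarrow> real)"

definition valid_iet :: "('a::finite \<Rightarrow> nat) \<Rightarrow> ('a \<Rightarrow> nat) \<Rightarrow> ('a \<Rightarrow> real) \<Rightarrow> bool" where
  "valid_iet pt pb lam \<longleftrightarrow> CARD('a) \<ge> 2 \<and>
     bij_betw pt UNIV {..<CARD('a)} \<and> bij_betw pb UNIV {..<CARD('a)} \<and>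
     (\<forall>a. lam a > 0) \<and> sum lam UNIV = 1"

definition lpos :: "('a::finite \<Rightarrow> nat) \<Rightarrow> ('a \<Rightarrow> real) \<Rightarrow> 'a \<Rightarrow> real" where
  "lpos p lam a = (\<Sum>b | p b < p a. lam b)"

definition subint :: "('a::finite \<Rightarrow> nat) \<Rightarrow> ('a \<Rightarrow> real) \<Rightarrow> 'a \<Rightarrow> real set" where
  "subint p lam a = {lpos p lam a ..< lpos p lam a + lam a}"

text \<open>The IET T_0 (identity outside [0,1)) and its inverse.\<close>
definition iet_map :: "('a::finite \<Rightarrow> nat) \<Rightarrow> ('a \<Rightarrow> nat) \<Rightarrow> ('a \<Rightarrow> real) \<Rightarrow> real \<Rightarrow> real" where
  "iet_map pt pb lam x = x + (\<Sum>a\<in>UNIV. if x \<in> subint pt lam a then lpos pb lam a - lpos pt lam a else 0)"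

definition iet_inv :: "('a::finite \<Rightarrow> nat) \<Rightarrow> ('a \<Rightarrow> nat) \<Rightarrow> ('a \<Rightarrow> real) \<Rightarrow> real \<Rightarrow> real" where
  "iet_inv pt pb lam x = x + (\<Sum>a\<in>UNIV. if x \<in> subint pb lam a then lpos pt lam a - lpos pb lam a else 0)"

definition f_iet :: "('a::finite \<Rightarrow> nat) \<Rightarrow> ('a \<Rightarrow> real) \<Rightarrow> ('a \<Rightarrow> real) \<Rightarrow> real \<Rightarrow> real" where
  "f_iet pt lam \<omega> x = (\<Sum>a\<in>UNIV. if x \<in> subint pt lam a then \<omega> a else 0)"

definition birkhoff :: "('a::finite \<Rightarrow> nat) \<Rightarrow> ('a \<Rightarrow> nat) \<Rightarrow> ('a \<Rightarrow> real) \<Rightarrow> (real \<Rightarrow> real) \<Rightarrow> int \<Rightarrow> real \<Rightarrow> real" where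
  "birkhoff pt pb lam g n x =
     (if n \<ge> 0 then (\<Sum>j<nat n. g ((iet_map pt pb lam ^^ j) x))
      else (\<Sum>i\<in>{1..nat (- n)}. g ((iet_inv pt pb lam ^^ i) x)))"

definition keane :: "('a::finite \<Rightarrow> nat) \<Rightarrow> ('a \<Rightarrow> nat) \<Rightarrow> ('a \<Rightarrow> real) \<Rightarrow> bool" where
  "keane pt pb lam \<longleftrightarrow> (\<forall>a b m. pt a \<noteq> 0 \<longrightarrow> pt b \<noteq> 0 \<longrightarrow> m \<ge> 1 \<longrightarrow>
      (iet_map pt pb lam ^^ m) (lpos pt lam a) \<noteq> lpos pt lam b)"

definition last_sym :: "('a::finite \<Rightarrow> nat) \<Rightarrow> 'a" where
  "last_sym p = (THE a. p a = CARD('a) - 1)"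

definition top_type :: "('a::finite) iet_data \<Rightarrow> bool" where
  "top_type s = (case s of (pt, pb, lam) \<Rightarrow> lam (last_sym pt) > lam (last_sym pb))"

definition rv_winner :: "('a::finite) iet_data \<Rightarrow> 'a" where
  "rv_winner s = (case s of (pt, pb, lam) \<Rightarrow>
     (if top_type s then last_sym pt else last_sym pb))"

definition rv_step :: "('a::finite) iet_data \<Rightarrow> 'a iet_data" where
  "rv_step s = (case s of (pt, pb, lam) \<Rightarrow>
     (let wt = last_sym pt; wb = last_sym pb in
      if lam wt > lam wb then
        (pt,
         (\<lambda>b. if b = wb then pb wt + 1 else if pb b > pb wt then pb b + 1 else pb b),
         lam(wt := lam wt - lam wb))
      else
        ((\<lambda>b. if b = wt then pt wb + 1 else if pt b > pt wb then pt b + 1 else pt b),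
         pb,
         lam(wb := lam wb - lam wt))))"

primrec rv :: "('a::finite) iet_data \<Rightarrow> nat \<Rightarrow> 'a iet_data" where
  "rv s 0 = s"
| "rv s (Suc n) = rv_step (rv s n)"

primrec ztime :: "('a::finite) iet_data \<Rightarrow> nat \<Rightarrow> nat" where
  "ztime s 0 = 0"
| "ztime s (Suc k) = (LEAST n. n > ztime s k \<and> top_type (rv s n) \<noteq> top_type (rv s (ztime s k)))"

definition inf_complete :: "('a::finite) iet_data \<Rightarrow> bool" where
  "inf_complete s \<longleftrightarrow> (\<forall>a. \<exists>\<^sub>\<infinity>n. rv_winner (rv s n) = a)"

definition zdata :: "('a::finite) iet_data \<Rightarrow> nat \<Rightarrow> 'a iet_data" where
  "zdata s n = rv s (ztime s n)"

definition ind_len :: "('a::finite) iet_data \<Rightarrow> nat \<Rightarrow> real" where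
  "ind_len s n = (case zdata s n of (pt, pb, lam) \<Rightarrow> sum lam UNIV)"

definition ind_left :: "('a::finite) iet_data \<Rightarrow> nat \<Rightarrow> 'a \<Rightarrow> real" where
  "ind_left s n a = (case zdata s n of (pt, pb, lam) \<Rightarrow> lpos pt lam a)"

definition ind_sub :: "('a::finite) iet_data \<Rightarrow> nat \<Rightarrow> 'a \<Rightarrow> real set" where
  "ind_sub s n a = (case zdata s n of (pt, pb, lam) \<Rightarrow> subint pt lam a)"

definition T0 :: "('a::finite) iet_data \<Rightarrow> real \<Rightarrow> real" where
  "T0 s = (case s of (pt, pb, lam) \<Rightarrow> iet_map pt pb lam)"

definition ret_time :: "('a::finite) iet_data \<Rightarrow> nat \<Rightarrow> real \<Rightarrow> nat" where
  "ret_time s n x = (LEAST j. j > 0 \<and> (T0 s ^^ j) x \<in> {0..<ind_len s n})"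

definition Zmat :: "('a::finite) iet_data \<Rightarrow> nat \<Rightarrow> nat \<Rightarrow> 'a \<Rightarrow> 'a \<Rightarrow> nat" where
  "Zmat s m n a b = card {j. j < ret_time s n (ind_left s n a) \<and>
                             (T0 s ^^ j) (ind_left s n a) \<in> ind_sub s m b}"

definition matvec :: "('a::finite \<Rightarrow> 'a \<Rightarrow> nat) \<Rightarrow> ('a \<Rightarrow> real) \<Rightarrow> 'a \<Rightarrow> real" where
  "matvec M v a = (\<Sum>b\<in>UNIV. real (M a b) * v b)"

definition vnorm :: "('a::finite \<Rightarrow> real) \<Rightarrow> real" where
  "vnorm v = (\<Sum>a\<in>UNIV. \<bar>v a\<bar>)"

definition lin_subspace :: "('a \<Rightarrow> real) set \<Rightarrow> bool" where
  "lin_subspace S \<longleftrightarrow> (\<lambda>_. 0) \<in> S \<and> (\<forall>u\<in>S. \<forall>v\<in>S. (\<lambda>a. u a + v a) \<in> S) \<and>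
                      (\<forall>c. \<forall>u\<in>S. (\<lambda>a. c * u a) \<in> S)"

definition oseledets_generic :: "('a::finite) iet_data \<Rightarrow> bool" where
  "oseledets_generic s \<longleftrightarrow> (\<exists>(F :: nat \<Rightarrow> ('a \<Rightarrow> real) set) (\<theta> :: nat \<Rightarrow> real) r.
      r \<ge> 1 \<and> F 0 = UNIV \<and> F r = {\<lambda>_. 0} \<and>
      (\<forall>i<r. lin_subspace (F i) \<and> F (Suc i) \<subset> F i) \<and>
      (\<forall>i j. i < j \<longrightarrow> j < r \<longrightarrow> \<theta> j < \<theta> i) \<and>
      (\<forall>i<r. \<forall>v \<in> F i - F (Suc i). \<forall>\<epsilon>>0. \<forall>\<^sub>F k in sequentially.
          exp ((\<theta> i - \<epsilon>) * real k) \<le> vnorm (matvec (Zmat s 0 k) v) \<and>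
          vnorm (matvec (Zmat s 0 k) v) \<le> exp ((\<theta> i + \<epsilon>) * real k)))"

text \<open>E_cs(T_0): vectors with nonpositive Lyapunov exponent for the Zorich cocycle.\<close>
definition E_cs :: "('a::finite) iet_data \<Rightarrow> ('a \<Rightarrow> real) set" where
  "E_cs s = {v. \<forall>\<epsilon>>0. \<forall>\<^sub>F k in sequentially.
                 vnorm (matvec (Zmat s 0 k) v) \<le> exp (\<epsilon> * real k)}"

definition BC_condition :: "('a::finite) iet_data \<Rightarrow> bool" where
  "BC_condition s \<longleftrightarrow> (case s of (pt, pb, lam) \<Rightarrow>
     valid_iet pt pb lam \<and> keane pt pb lam \<and> oseledets_generic s \<and> inf_complete s \<and>
     (\<exists>nk :: nat \<Rightarrow> nat. strict_mono nk \<and>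
        (\<exists>N::nat. \<exists>K::nat. K > 0 \<and> (\<forall>k a b. 1 \<le> Zmat s (nk k) (nk k + N) a b \<and>
                                              Zmat s (nk k) (nk k + N) a b \<le> K)) \<and>
        (\<exists>V>0. \<forall>k. \<forall>v\<in>E_cs s. vnorm (matvec (Zmat s 0 (nk k)) v) \<le> V * vnorm v)))"

end

theory Submission
  imports Defs
begin

text \<open>Fix \<open>k\<close> and let \<open>I = I\<^sup>(\<^sup>n\<^sup>k\<^sup>)\<close>. Every \<open>x \<in> [0, 1)\<close> lies in the Rokhlin tower over
  \<open>I\<close>: \<open>x = T\<^sub>0\<^sup>i y\<close> with \<open>y \<in> I\<^sub>a\<close> and \<open>i\<close> below the return time of \<open>y\<close>. Since every tower over
  a cell of \<open>I\<^sup>(\<^sup>n\<^sup>k\<^sup>+\<^sup>N\<^sup>)\<close> crosses every cell of \<open>I\<close> and has height at most \<open>d K\<close>,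
  the first return map of \<open>I\<close> brings \<open>y\<close> back to \<open>I\<^sub>a\<close> after \<open>e \<le> 2 d K\<close> returns, at some
  time \<open>m\<close>. As \<open>y\<close> and \<open>T\<^sub>0\<^sup>m y\<close> follow the same itinerary for \<open>i\<close> steps, \<open>S\<^sub>m f(x) = S\<^sub>m f(y)\<close>,
  and the latter splits into \<open>e\<close> sums over single returns, each an entry of
  \<open>Z\<^sub>0\<^sub>,\<^sub>n\<^sub>k \<omega>\<close>, hence bounded by \<open>V |\<omega>|\<close>. Finally \<open>m\<close> is at least the minimal return time to
  \<open>I\<close>, which doubles from \<open>n\<^sub>k\<close> to \<open>n\<^sub>k + N\<close> because \<open>d \<ge> 2\<close>, so these times are
  unbounded; negative indices \<open>k\<close> simply reuse the time chosen for \<open>|k|\<close>.\<close>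

section \<open>Geometry of an interval exchange\<close>

lemma pos_less_card: "bij_betw p UNIV {..<CARD('a::finite)} \<Longrightarrow> p (a::'a) < CARD('a)"
  using bij_betwE by blast

lemma pos_surj: "bij_betw p UNIV {..<CARD('a::finite)} \<Longrightarrow> k < CARD('a) \<Longrightarrow> \<exists>a::'a. p a = k"
  unfolding bij_betw_def by (metis UNIV_I imageE lessThan_iff)

lemma lpos_nonneg: "(\<forall>a. lam a \<ge> 0) \<Longrightarrow> lpos p lam a \<ge> 0"
  unfolding lpos_def by (simp add: sum_nonneg)

lemma lpos_add_le_lpos:
  assumes "\<forall>a. (lam::'a::finite\<Rightarrow>real) a \<ge> 0" "p a < p b"
  shows "lpos p lam a + lam a \<le> lpos p lam b"
proof -
  have "lpos p lam a + lam a = sum lam ({c. p c < p a} \<union> {a})"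
    unfolding lpos_def by (subst sum.union_disjoint) auto
  also have "\<dots> \<le> sum lam {c. p c < p b}"
    by (rule sum_mono2) (use assms in auto)
  finally show ?thesis unfolding lpos_def .
qed

lemma lpos_add_le_sum:
  assumes "\<forall>a. (lam::'a::finite\<Rightarrow>real) a \<ge> 0"
  shows "lpos p lam a + lam a \<le> sum lam UNIV"
proof -
  have "lpos p lam a + lam a = sum lam ({c. p c < p a} \<union> {a})"
    unfolding lpos_def by (subst sum.union_disjoint) auto
  also have "\<dots> \<le> sum lam UNIV"
    by (rule sum_mono2) (use assms in auto)
  finally show ?thesis .
qed

lemma lpos_add_eq_sum_le:
  assumes "inj p"
  shows "lpos p lam a + lam a = sum lam {c. p c \<le> p a}"
proof -
  have "{c. p c \<le> p a} = {c. p c < p a} \<union> {a}"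
    using assms by (auto simp: inj_def le_less)
  thus ?thesis unfolding lpos_def by (simp add: sum.union_disjoint)
qed

lemma lpos_next:
  assumes "inj p" "p b = Suc (p a)"
  shows "lpos p lam b = lpos p lam a + lam a"
proof -
  have "{c. p c < p b} = {c. p c \<le> p a}" using assms(2) by auto
  thus ?thesis using lpos_add_eq_sum_le[OF assms(1)] unfolding lpos_def by simp
qed

lemma lpos_last:
  assumes "bij_betw p UNIV {..<CARD('a::finite)}" "p (a::'a) = CARD('a) - 1"
  shows "lpos p lam a + lam a = sum lam UNIV"
proof -
  have "inj p" using assms(1) bij_betw_def by blast
  moreover have "{c. p c \<le> p a} = UNIV"
  proof (rule set_eqI)
    fix c
    have "p c < CARD('a)" using pos_less_card[OF assms(1)] .
    thus "c \<in> {c. p c \<le> p a} \<longleftrightarrow> c \<in> UNIV" using assms(2) by simp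
  qed
  ultimately show ?thesis using lpos_add_eq_sum_le by metis
qed

lemma subint_disjoint:
  assumes "inj p" "\<forall>a. lam a \<ge> 0" "a \<noteq> b"
  shows "subint p lam a \<inter> subint p lam b = {}"
proof -
  have "p a \<noteq> p b" using assms by (auto simp: inj_def)
  hence "p a < p b \<or> p b < p a" by auto
  thus ?thesis using lpos_add_le_lpos[OF assms(2), of p a b] lpos_add_le_lpos[OF assms(2), of p b a]
    unfolding subint_def by auto
qed

lemma subint_subset:
  assumes "\<forall>a. lam a \<ge> 0"
  shows "subint p lam a \<subseteq> {0..<sum lam UNIV}"
proof
  fix x assume "x \<in> subint p lam a"
  thus "x \<in> {0..<sum lam UNIV}"
    using lpos_nonneg[OF assms, of p a] lpos_add_le_sum[OF assms, of p a] unfolding subint_def by auto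
qed

lemma subint_cover:
  assumes "bij_betw p UNIV {..<CARD('a::finite)}" "\<forall>a. lam a \<ge> 0"
    and "0 \<le> x" "x < sum lam UNIV"
  shows "\<exists>a::'a. x \<in> subint p lam a"
proof -
  have inj: "inj p" using assms(1) bij_betw_def by blast
  obtain a0 where a0: "p a0 = 0" using pos_surj[OF assms(1), of 0] by fastforce
  have l0: "lpos p lam a0 = 0" unfolding lpos_def using a0 by simp
  let ?P = "{a. lpos p lam a \<le> x}"
  have "a0 \<in> ?P" using l0 assms(3) by auto
  hence ne: "?P \<noteq> {}" by blast
  define m where "m = Max (p ` ?P)"
  have "m \<in> p ` ?P" unfolding m_def using ne by (intro Max_in) auto
  then obtain a where a: "a \<in> ?P" "p a = m" by auto
  have amax: "\<And>b. b \<in> ?P \<Longrightarrow> p b \<le> p a" using a(2) unfolding m_def by simp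
  show ?thesis
  proof (rule ccontr)
    assume "\<not> ?thesis"
    hence ge: "x \<ge> lpos p lam a + lam a" using a(1) unfolding subint_def by auto
    show False
    proof (cases "p a = CARD('a) - 1")
      case True
      thus False using lpos_last[OF assms(1) True] ge assms(4) by simp
    next
      case False
      hence "Suc (p a) < CARD('a)" using pos_less_card[OF assms(1), of a] by auto
      then obtain b where b: "p b = Suc (p a)" using pos_surj[OF assms(1)] by blast
      have "lpos p lam b \<le> x" using lpos_next[OF inj b] ge by simp
      thus False using amax[of b] b by simp
    qed
  qed
qed

lemma sum_if_unique:
  fixes g :: "'a::finite \<Rightarrow> 'b::comm_monoid_add"
  assumes "\<And>c. c \<noteq> a \<Longrightarrow> \<not> P c" "P a"
  shows "(\<Sum>c\<in>UNIV. if P c then g c else 0) = g a"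
proof -
  have "(\<Sum>c\<in>UNIV. if P c then g c else 0) = (\<Sum>c\<in>UNIV. if c = a then g c else 0)"
    by (rule sum.cong) (use assms in auto)
  thus ?thesis by simp
qed

lemma iet_map_eq:
  assumes "inj pt" "\<forall>a. lam a \<ge> 0" "x \<in> subint pt lam a"
  shows "iet_map pt pb lam x = x + lpos pb lam a - lpos pt lam a"
proof -
  have "\<And>c. c \<noteq> a \<Longrightarrow> x \<notin> subint pt lam c" using subint_disjoint[OF assms(1,2)] assms(3) by blast
  thus ?thesis unfolding iet_map_def using sum_if_unique[of a "\<lambda>c. x \<in> subint pt lam c"] assms(3)
    by simp
qed

lemma iet_map_subint:
  assumes "inj pt" "\<forall>a. lam a \<ge> 0" "x \<in> subint pt lam a"
  shows "iet_map pt pb lam x \<in> subint pb lam a"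
  using iet_map_eq[OF assms] assms(3) unfolding subint_def by auto

lemma iet_map_onto:
  assumes "inj pt" "\<forall>a. lam a \<ge> 0" "y \<in> subint pb lam a"
  shows "\<exists>x \<in> subint pt lam a. iet_map pt pb lam x = y"
proof -
  let ?x = "y - lpos pb lam a + lpos pt lam a"
  have "?x \<in> subint pt lam a" using assms(3) unfolding subint_def by auto
  moreover have "iet_map pt pb lam ?x = y" using iet_map_eq[OF assms(1,2) calculation] by simp
  ultimately show ?thesis by blast
qed

lemma f_iet_eq:
  assumes "inj pt" "\<forall>a. lam a \<ge> 0" "x \<in> subint pt lam a"
  shows "f_iet pt lam \<omega> x = \<omega> a"
proof -
  have "\<And>c. c \<noteq> a \<Longrightarrow> x \<notin> subint pt lam c" using subint_disjoint[OF assms(1,2)] assms(3) by blast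
  thus ?thesis unfolding f_iet_def using sum_if_unique[of a "\<lambda>c. x \<in> subint pt lam c"] assms(3)
    by simp
qed

lemma pos_last_sym:
  fixes p :: "'a::finite \<Rightarrow> nat"
  assumes "bij_betw p UNIV {..<CARD('a::finite)}"
  shows "p (last_sym p) = CARD('a) - 1"
proof -
  have "CARD('a) - 1 < CARD('a)" using finite_UNIV_card_ge_0 by fastforce
  then obtain a::'a where a: "p a = CARD('a) - 1" using pos_surj[OF assms] by blast
  have "\<And>b. p b = CARD('a) - 1 \<Longrightarrow> b = a"
    using bij_betw_imp_inj_on[OF assms] a by (metis injD)
  hence "last_sym p = a" unfolding last_sym_def using a by (intro the_equality) blast+
  thus ?thesis using a by simp
qed

lemma bij_betw_lessThan_card:
  fixes f :: "'a::finite \<Rightarrow> nat"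
  assumes "inj f" "\<And>a. f a < CARD('a)"
  shows "bij_betw f UNIV {..<CARD('a)}"
proof -
  have sub: "f ` UNIV \<subseteq> {..<CARD('a)}" using assms(2) by auto
  have "card (f ` UNIV) = CARD('a)" using assms(1) by (simp add: card_image)
  hence "f ` UNIV = {..<CARD('a)}" using sub by (intro card_subset_eq) auto
  thus ?thesis using assms(1) by (simp add: bij_betw_def)
qed

section \<open>One Rauzy--Veech step\<close>

text \<open>One Rauzy--Veech step on a row \<open>p\<close>: the last symbol \<open>loser\<close> of the row is reinserted
  just after \<open>winner\<close>, whose interval is shortened by the length of the loser's.\<close>
locale row_insertion =
  fixes p :: "'a::finite \<Rightarrow> nat" and loser winner :: 'a and lam :: "'a \<Rightarrow> real"
  assumes bij: "bij_betw p UNIV {..<CARD('a)}"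
    and p_loser: "p loser = CARD('a) - 1" and winner_neq_loser: "winner \<noteq> loser"
begin

definition p_ins where
  "p_ins = (\<lambda>b. if b = loser then p winner + 1 else if p b > p winner then p b + 1 else p b)"
definition lam_ins where "lam_ins = lam(winner := lam winner - lam loser)"

lemma inj_p: "inj p" using bij bij_betw_def by blast
lemma p_less: "p a < CARD('a)" using pos_less_card[OF bij] .

lemma p_less_last: "a \<noteq> loser \<Longrightarrow> p a < CARD('a) - 1"
proof -
  assume "a \<noteq> loser"
  hence "p a \<noteq> p loser" using inj_p by (auto simp: inj_def)
  thus ?thesis using p_loser p_less[of a] by simp
qed

lemma bij_ins: "bij_betw p_ins UNIV {..<CARD('a)}"
proof (rule bij_betw_lessThan_card)
  show "inj p_ins"
  proof (rule injI)
    fix a b assume "p_ins a = p_ins b"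
    thus "a = b" unfolding p_ins_def using inj_p
      by (auto split: if_splits simp: inj_def)
  qed
  fix a show "p_ins a < CARD('a)"
    unfolding p_ins_def using p_less_last[OF winner_neq_loser] p_less_last[of a] by auto
qed

lemma lpos_ins_loser: "lpos p_ins lam_ins loser = lpos p lam winner + lam_ins winner"
proof -
  have "{c. p_ins c < p_ins loser} = {c. p c \<le> p winner}"
    using p_loser p_less_last[OF winner_neq_loser] unfolding p_ins_def by (auto split: if_splits)
  hence "lpos p_ins lam_ins loser = sum lam_ins {c. p c \<le> p winner}" unfolding lpos_def by simp
  also have "\<dots> = lpos p lam_ins winner + lam_ins winner" using lpos_add_eq_sum_le[OF inj_p] by simp
  also have "lpos p lam_ins winner = lpos p lam winner"
    unfolding lpos_def lam_ins_def by (rule sum.cong) auto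
  finally show ?thesis .
qed

lemma lpos_ins_other:
  assumes "a \<noteq> loser"
  shows "lpos p_ins lam_ins a = lpos p lam a"
proof (cases "p a \<le> p winner")
  case True
  hence "{c. p_ins c < p_ins a} = {c. p c < p a}"
    using assms p_loser p_less_last[OF winner_neq_loser] unfolding p_ins_def
    by (auto split: if_splits)
  hence "lpos p_ins lam_ins a = sum lam_ins {c. p c < p a}" unfolding lpos_def by simp
  also have "\<dots> = lpos p lam a" unfolding lpos_def lam_ins_def using True by (intro sum.cong) auto
  finally show ?thesis .
next
  case False
  let ?P = "{c. p c < p a}"
  have loser_notin: "loser \<notin> ?P" using p_loser p_less_last[OF assms] by auto
  have winner_in: "winner \<in> ?P" using False by simp
  have "{c. p_ins c < p_ins a} = insert loser ?P"
    using assms p_loser p_less_last[OF winner_neq_loser] False unfolding p_ins_def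
    by (auto split: if_splits)
  hence "lpos p_ins lam_ins a = lam_ins loser + sum lam_ins ?P"
    unfolding lpos_def using loser_notin by simp
  also have "sum lam_ins ?P = lam_ins winner + sum lam (?P - {winner})"
    using winner_in unfolding lam_ins_def by (simp add: sum.remove)
  also have "\<dots> = sum lam ?P - lam loser"
    using winner_in by (simp add: lam_ins_def sum.remove)
  finally show ?thesis unfolding lpos_def lam_ins_def using winner_neq_loser by simp
qed

lemma ins_eq_0_iff: "a \<noteq> loser \<Longrightarrow> (p_ins a = 0) = (p a = 0)"
  unfolding p_ins_def by auto

end

text \<open>This is \<open>valid_iet\<close> without the normalisation \<open>sum lam UNIV = 1\<close>, which the induced
  IETs on \<open>[0, sum lam UNIV)\<close> do not satisfy.\<close>
definition pos_iet :: "('a::finite \<Rightarrow> nat) \<Rightarrow> ('a \<Rightarrow> nat) \<Rightarrow> ('a \<Rightarrow> real) \<Rightarrow> bool" where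
  "pos_iet pt pb lam \<longleftrightarrow> CARD('a) \<ge> 2 \<and> bij_betw pt UNIV {..<CARD('a)} \<and>
     bij_betw pb UNIV {..<CARD('a)} \<and> (\<forall>a. lam a > 0)"

lemma lpos_upd_last:
  assumes "bij_betw q UNIV {..<CARD('a::finite)}" "q (y::'a) = CARD('a) - 1"
  shows "lpos q (lam(y := v)) a = lpos q lam a"
proof -
  have "y \<notin> {c. q c < q a}" using assms pos_less_card[OF assms(1), of a] by auto
  thus ?thesis unfolding lpos_def by (intro sum.cong) auto
qed

lemma keaneD:
  assumes "keane pt pb lam" "pt a \<noteq> 0" "pt b \<noteq> 0" "m \<ge> 1"
  shows "(iet_map pt pb lam ^^ m) (lpos pt lam a) \<noteq> lpos pt lam b"
  using assms unfolding keane_def by blast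

lemma sum_fun_upd: "sum (f(y := v)) (UNIV::'a::finite set) = sum f UNIV - f y + (v::'b::ab_group_add)"
proof -
  have "sum (f(y := v)) UNIV = v + sum (f(y := v)) (UNIV - {y})"
    by (subst sum.remove[of _ y]) simp_all
  also have "sum (f(y := v)) (UNIV - {y}) = sum f (UNIV - {y})" by (rule sum.cong) auto
  also have "\<dots> = sum f UNIV - f y" by (subst sum.remove[of _ y]) simp_all
  finally show ?thesis by simp
qed

lemma iet_map_range:
  assumes "bij_betw pt UNIV {..<CARD('a::finite)}" "\<forall>a. (lam::'a \<Rightarrow> real) a \<ge> 0"
    and "z \<in> {0..<sum lam UNIV}"
  shows "iet_map pt pb lam z \<in> {0..<sum lam UNIV}"
proof -
  have inj: "inj pt" using assms(1) bij_betw_def by blast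
  obtain a where "z \<in> subint pt lam a" using subint_cover[OF assms(1,2)] assms(3) by auto
  thus ?thesis using iet_map_subint[OF inj assms(2)] subint_subset[OF assms(2)] by blast
qed

lemma funpow_one_or_two_steps:
  assumes "\<And>z. z \<in> A \<Longrightarrow> G z \<in> A \<and> (G z = F z \<or> G z = F (F z))" "z \<in> A"
  shows "\<exists>M\<ge>m. (G ^^ m) z = (F ^^ M) z"
  using assms(2)
proof (induction m arbitrary: z)
  case 0 thus ?case by (intro exI[of _ 0]) simp
next
  case (Suc m)
  have GA: "G z \<in> A" using assms(1) Suc.prems by blast
  obtain M where M: "M \<ge> m" "(G ^^ m) (G z) = (F ^^ M) (G z)" using Suc.IH[OF GA] by blast
  have eq: "(G ^^ Suc m) z = (G ^^ m) (G z)" by (simp add: funpow_Suc_right del: funpow.simps)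
  show ?case
  proof (cases "G z = F z")
    case True
    hence "(G ^^ Suc m) z = (F ^^ Suc M) z" using eq M by (simp add: funpow_Suc_right del: funpow.simps)
    thus ?thesis using M by (intro exI[of _ "Suc M"]) simp
  next
    case False
    hence "G z = F (F z)" using assms(1) Suc.prems by blast
    hence "(G ^^ Suc m) z = (F ^^ Suc (Suc M)) z" using eq M
      by (simp add: funpow_Suc_right del: funpow.simps)
    thus ?thesis using M by (intro exI[of _ "Suc (Suc M)"]) simp
  qed
qed

definition base :: "('a::finite) iet_data \<Rightarrow> real set" where
  "base S = (case S of (pt, pb, lam) \<Rightarrow> {0..<sum lam UNIV})"

definition cell :: "('a::finite) iet_data \<Rightarrow> 'a \<Rightarrow> real set" where
  "cell S a = (case S of (pt, pb, lam) \<Rightarrow> subint pt lam a)"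

definition keane_data :: "('a::finite) iet_data \<Rightarrow> bool" where
  "keane_data S = (case S of (pt, pb, lam) \<Rightarrow> pos_iet pt pb lam \<and> keane pt pb lam)"

text \<open>How the IET \<open>S'\<close> produced by one Rauzy--Veech step sits inside \<open>S\<close>: on each of its
  subintervals the new map is uniformly either the old map or its square, the intermediate point
  lying in the discarded part \<open>base S - base S'\<close>, which the old map covers from \<open>base S'\<close>.\<close>
definition rv_refines :: "('a::finite) iet_data \<Rightarrow> 'a iet_data \<Rightarrow> bool" where
  "rv_refines S S' \<longleftrightarrow> keane_data S' \<and> base S' \<subseteq> base S \<and> (\<forall>a. \<exists>b. cell S' a \<subseteq> cell S b) \<and>
     (\<forall>a. (\<forall>z\<in>cell S' a. T0 S z \<in> base S' \<and> T0 S' z = T0 S z) \<or>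
          (\<exists>w. \<forall>z\<in>cell S' a. T0 S z \<in> cell S w \<and> T0 S z \<notin> base S' \<and> T0 S' z = T0 S (T0 S z))) \<and>
     base S - base S' \<subseteq> T0 S ` base S'"

locale keane_iet =
  fixes pt pb :: "'a::finite \<Rightarrow> nat" and lam :: "'a \<Rightarrow> real"
  assumes pos_iet: "pos_iet pt pb lam" and keane: "keane pt pb lam"
begin

abbreviation "L \<equiv> sum lam UNIV"
abbreviation "T \<equiv> iet_map pt pb lam"
definition "wt = last_sym pt"
definition "wb = last_sym pb"

lemma bij_pt: "bij_betw pt UNIV {..<CARD('a)}" using pos_iet pos_iet_def by blast
lemma bij_pb: "bij_betw pb UNIV {..<CARD('a)}" using pos_iet pos_iet_def by blast
lemma card_ge_2: "CARD('a) \<ge> 2" using pos_iet pos_iet_def by blast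
lemma lam_pos: "\<forall>a. lam a > 0" using pos_iet pos_iet_def by blast
lemma lam_nonneg: "\<forall>a. lam a \<ge> 0" using lam_pos less_imp_le by blast
lemma inj_pt: "inj pt" using bij_pt bij_betw_def by blast
lemma inj_pb: "inj pb" using bij_pb bij_betw_def by blast
lemma pt_wt: "pt wt = CARD('a) - 1" unfolding wt_def using pos_last_sym[OF bij_pt] .
lemma pb_wb: "pb wb = CARD('a) - 1" unfolding wb_def using pos_last_sym[OF bij_pb] .
lemma pt_wt_neq_0: "pt wt \<noteq> 0" using pt_wt card_ge_2 by simp
lemma pb_wb_neq_0: "pb wb \<noteq> 0" using pb_wb card_ge_2 by simp

lemma lpos_wt: "lpos pt lam wt = L - lam wt" using lpos_last[OF bij_pt pt_wt, of lam] by linarith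
lemma lpos_wb: "lpos pb lam wb = L - lam wb" using lpos_last[OF bij_pb pb_wb, of lam] by linarith

lemma subint_pt_wt: "subint pt lam wt = {L - lam wt..<L}"
  unfolding subint_def using lpos_wt by simp

lemma subint_pb_wb: "subint pb lam wb = {L - lam wb..<L}"
  unfolding subint_def using lpos_wb by simp

lemma T_eq: "z \<in> subint pt lam a \<Longrightarrow> T z = z + lpos pb lam a - lpos pt lam a"
  using iet_map_eq[OF inj_pt lam_nonneg] .

lemma T_subint: "z \<in> subint pt lam a \<Longrightarrow> T z \<in> subint pb lam a"
  using iet_map_subint[OF inj_pt lam_nonneg] .

lemma T_subint_range: "z \<in> subint pt lam a \<Longrightarrow> T z \<in> {0..<L}"
  using T_subint subint_subset[OF lam_nonneg] by blast

lemma T_range: "z \<in> {0..<L} \<Longrightarrow> T z \<in> {0..<L}"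
  using iet_map_range[OF bij_pt lam_nonneg] .

lemma lpos_in_subint: "lpos pt lam a \<in> subint pt lam a"
  unfolding subint_def using lam_pos by auto

lemma wt_neq_wb: "wt \<noteq> wb"
proof
  assume eq: "wt = wb"
  have "T (lpos pt lam wt) = lpos pb lam wt" using T_eq[OF lpos_in_subint] by simp
  also have "\<dots> = lpos pt lam wt" using lpos_wt lpos_wb eq by simp
  finally have "(T ^^ 1) (lpos pt lam wt) = lpos pt lam wt" by simp
  thus False using keaneD[OF keane pt_wt_neq_0 pt_wt_neq_0, of 1] by auto
qed

text \<open>Equal last lengths would give a connection: \<open>T\<close> maps the left endpoint of \<open>wb\<close> (or, if
  that is \<open>0\<close>, the left endpoint of the interval sent to \<open>0\<close>) onto the left endpoint of \<open>wt\<close>.\<close>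
lemma lam_wt_neq_lam_wb: "lam wt \<noteq> lam wb"
proof
  assume eq: "lam wt = lam wb"
  have im: "T (lpos pt lam wb) = lpos pt lam wt"
    using T_eq[OF lpos_in_subint, of wb] lpos_wt lpos_wb eq by simp
  show False
  proof (cases "pt wb = 0")
    case False
    thus False using keaneD[OF keane False pt_wt_neq_0, of 1] im by simp
  next
    case True
    obtain c where c: "pb c = 0" using pos_surj[OF bij_pb, of 0] card_ge_2 by auto
    have cnz: "pt c \<noteq> 0"
    proof
      assume "pt c = 0"
      hence "c = wb" using True inj_pt by (auto simp: inj_def)
      thus False using c pb_wb_neq_0 by simp
    qed
    have "T (lpos pt lam c) = 0" using T_eq[OF lpos_in_subint, of c] c unfolding lpos_def by simp
    hence "(T ^^ 2) (lpos pt lam c) = lpos pt lam wt"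
      using im True unfolding lpos_def by (simp add: numeral_2_eq_2)
    thus False using keaneD[OF keane cnz pt_wt_neq_0, of 2] by simp
  qed
qed

lemma pt_wb_less: "pt wb < pt wt"
proof -
  have "pt wb \<noteq> pt wt" using wt_neq_wb inj_pt by (auto simp: inj_def)
  thus ?thesis using pt_wt pos_less_card[OF bij_pt, of wb] by simp
qed

lemma lpos_wb_le: "lpos pt lam wb + lam wb \<le> L - lam wt"
  using lpos_add_le_lpos[OF lam_nonneg pt_wb_less] lpos_wt by simp

end

lemma keane_data_iff_keane_iet: "keane_data (pt, pb, lam) \<longleftrightarrow> keane_iet pt pb lam"
  unfolding keane_data_def keane_iet_def by simp

lemma keane_data_cases:
  assumes "keane_data S"
  obtains pt pb lam where "S = (pt, pb, lam)" "keane_iet pt pb lam"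
  using assms keane_data_iff_keane_iet by (cases S) auto

lemma cell_subset_base: "keane_data S \<Longrightarrow> cell S a \<subseteq> base S"
  by (elim keane_data_cases)
    (simp add: cell_def base_def subint_subset keane_iet.lam_nonneg)

lemma cell_disjoint: "keane_data S \<Longrightarrow> a \<noteq> b \<Longrightarrow> cell S a \<inter> cell S b = {}"
  by (elim keane_data_cases)
    (simp add: cell_def subint_disjoint keane_iet.inj_pt keane_iet.lam_nonneg)

lemma base_covered_by_cells:
  assumes "keane_data S" "x \<in> base S"
  shows "\<exists>a. x \<in> cell S a"
proof -
  obtain pt pb lam where S: "S = (pt, pb, lam)" and k: "keane_iet pt pb lam"
    using assms(1) by (rule keane_data_cases)
  show ?thesis using subint_cover[OF keane_iet.bij_pt[OF k] keane_iet.lam_nonneg[OF k]] assms(2)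
    unfolding S cell_def base_def by auto
qed

lemma T0_base:
  assumes "keane_data S" "x \<in> base S"
  shows "T0 S x \<in> base S"
proof -
  obtain pt pb lam where S: "S = (pt, pb, lam)" and k: "keane_iet pt pb lam"
    using assms(1) by (rule keane_data_cases)
  show ?thesis using keane_iet.T_range[OF k] assms(2) unfolding S T0_def base_def by auto
qed

locale rv_top_step = keane_iet +
  assumes top_wins: "lam wb < lam wt"
begin

sublocale ins: row_insertion pb wb wt lam
  using bij_pb pb_wb wt_neq_wb by unfold_locales auto

abbreviation "pb' \<equiv> ins.p_ins"
abbreviation "lam' \<equiv> ins.lam_ins"
abbreviation "L' \<equiv> sum lam' UNIV"
abbreviation "T' \<equiv> iet_map pt pb' lam'"

lemma lam'_pos: "\<forall>a. lam' a > 0"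
  using lam_pos top_wins unfolding ins.lam_ins_def by auto

lemma lam'_nonneg: "\<forall>a. lam' a \<ge> 0"
  using lam'_pos less_imp_le by blast

lemma L'_eq: "L' = L - lam wb"
  unfolding ins.lam_ins_def sum_fun_upd by simp

lemma lpos_pt_lam': "lpos pt lam' a = lpos pt lam a"
  unfolding ins.lam_ins_def using lpos_upd_last[OF bij_pt pt_wt] .

lemma pos_iet': "pos_iet pt pb' lam'"
  unfolding pos_iet_def using card_ge_2 bij_pt ins.bij_ins lam'_pos by simp

lemma subint_lam'_subset: "subint pt lam' a \<subseteq> subint pt lam a"
  unfolding subint_def lpos_pt_lam' using lam_nonneg top_wins unfolding ins.lam_ins_def by auto

lemma T'_eq: "z \<in> subint pt lam' a \<Longrightarrow> T' z = z + lpos pb' lam' a - lpos pt lam a"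
  using iet_map_eq[OF inj_pt lam'_nonneg] lpos_pt_lam' by simp

lemma T'_other:
  assumes a: "a \<noteq> wb" and z: "z \<in> subint pt lam' a"
  shows "T z \<in> {0..<L'} \<and> T' z = T z"
proof
  have z0: "z \<in> subint pt lam a" using z subint_lam'_subset by blast
  have "T z \<notin> subint pb lam wb"
    using T_subint[OF z0] subint_disjoint[OF inj_pb lam_nonneg a] by blast
  thus "T z \<in> {0..<L'}" using T_subint_range[OF z0] subint_pb_wb L'_eq by auto
  show "T' z = T z" using T'_eq[OF z] ins.lpos_ins_other[OF a] T_eq[OF z0] by simp
qed

lemma T'_wb:
  assumes z: "z \<in> subint pt lam' wb"
  shows "T z \<in> subint pt lam wt \<and> T z \<notin> {0..<L'} \<and> T' z = T (T z)"
proof (intro conjI)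
  have z0: "z \<in> subint pt lam wb" using z subint_lam'_subset by blast
  have Tz: "T z = z + (L - lam wb) - lpos pt lam wb" using T_eq[OF z0] lpos_wb by simp
  have Tzb: "T z \<in> subint pb lam wb" using T_subint[OF z0] .
  show Tzt: "T z \<in> subint pt lam wt" using Tzb subint_pb_wb subint_pt_wt top_wins by auto
  show "T z \<notin> {0..<L'}" using Tzb subint_pb_wb L'_eq by auto
  have "T (T z) = T z + lpos pb lam wt - (L - lam wt)" using T_eq[OF Tzt] lpos_wt by simp
  moreover have "T' z = z + lpos pb lam wt + lam' wt - lpos pt lam wb"
    using T'_eq[OF z] ins.lpos_ins_loser by simp
  ultimately show "T' z = T (T z)" using Tz unfolding ins.lam_ins_def by simp
qed

lemma T'_one_or_two: "z \<in> {0..<L'} \<Longrightarrow> T' z \<in> {0..<L'} \<and> (T' z = T z \<or> T' z = T (T z))"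
proof -
  assume z: "z \<in> {0..<L'}"
  then obtain a where "z \<in> subint pt lam' a" using subint_cover[OF bij_pt lam'_nonneg] by auto
  thus ?thesis using iet_map_range[OF bij_pt lam'_nonneg z] T'_other T'_wb by metis
qed

lemma keane': "keane pt pb' lam'"
  unfolding keane_def
proof (intro allI impI)
  fix a b m assume a: "pt a \<noteq> 0" and b: "pt b \<noteq> 0" and m: "(m::nat) \<ge> 1"
  have "lpos pt lam' a \<in> {0..<L'}"
    using lpos_in_subint[of a] subint_lam'_subset subint_subset[OF lam'_nonneg, of pt a]
    unfolding subint_def lpos_pt_lam' using lam'_pos by fastforce
  then obtain M where M: "M \<ge> m" "(T' ^^ m) (lpos pt lam' a) = (T ^^ M) (lpos pt lam' a)"
    using funpow_one_or_two_steps[of "{0..<L'}" T' T, OF T'_one_or_two] by blast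
  show "(T' ^^ m) (lpos pt lam' a) \<noteq> lpos pt lam' b"
    using keaneD[OF keane a b, of M] M m lpos_pt_lam' by simp
qed

lemma T_onto_cut: "{0..<L} - {0..<L'} \<subseteq> T ` {0..<L'}"
proof
  fix u assume "u \<in> {0..<L} - {0..<L'}"
  hence u: "u \<in> {L'..<L}" by auto
  hence "u \<in> subint pb lam wb" using subint_pb_wb L'_eq by simp
  then obtain z where z: "z \<in> subint pt lam wb" "T z = u"
    using iet_map_onto[OF inj_pt lam_nonneg] by blast
  have "z \<in> {0..<L'}" using z(1) lpos_wb_le lpos_nonneg[OF lam_nonneg, of pt wb] L'_eq top_wins
    unfolding subint_def by auto
  thus "u \<in> T ` {0..<L'}" using z(2) by blast
qed

lemma rv_step_eq: "rv_step (pt, pb, lam) = (pt, pb', lam')"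
  using top_wins unfolding ins.p_ins_def ins.lam_ins_def unfolding rv_step_def Let_def wt_def wb_def
  by simp

lemma refines: "rv_refines (pt, pb, lam) (pt, pb', lam')"
proof -
  have "(\<forall>z\<in>subint pt lam' a. T z \<in> {0..<L'} \<and> T' z = T z) \<or>
      (\<exists>w. \<forall>z\<in>subint pt lam' a. T z \<in> subint pt lam w \<and> T z \<notin> {0..<L'} \<and> T' z = T (T z))"
    for a
    using T'_other T'_wb by (cases "a = wb") blast+
  moreover have "{0..<L'} \<subseteq> {0..<L}" using L'_eq lam_nonneg by auto
  ultimately show ?thesis
    unfolding rv_refines_def keane_data_def base_def cell_def T0_def prod.case
    using pos_iet' keane' subint_lam'_subset T_onto_cut by blast
qed

end

locale rv_bot_step = keane_iet +
  assumes bot_wins: "lam wt < lam wb"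
begin

sublocale ins: row_insertion pt wt wb lam
  using bij_pt pt_wt wt_neq_wb by unfold_locales auto

abbreviation "pt' \<equiv> ins.p_ins"
abbreviation "lam' \<equiv> ins.lam_ins"
abbreviation "L' \<equiv> sum lam' UNIV"
abbreviation "T' \<equiv> iet_map pt' pb lam'"

lemma lam'_pos: "\<forall>a. lam' a > 0"
  using lam_pos bot_wins unfolding ins.lam_ins_def by auto

lemma lam'_nonneg: "\<forall>a. lam' a \<ge> 0"
  using lam'_pos less_imp_le by blast

lemma L'_eq: "L' = L - lam wt"
  unfolding ins.lam_ins_def sum_fun_upd by simp

lemma lpos_pb_lam': "lpos pb lam' a = lpos pb lam a"
  unfolding ins.lam_ins_def using lpos_upd_last[OF bij_pb pb_wb] .

lemma inj_pt': "inj pt'"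
  using ins.bij_ins bij_betw_def by blast

lemma pos_iet': "pos_iet pt' pb lam'"
  unfolding pos_iet_def using card_ge_2 ins.bij_ins bij_pb lam'_pos by simp

lemma subint_other_subset: "a \<noteq> wt \<Longrightarrow> subint pt' lam' a \<subseteq> subint pt lam a"
  unfolding subint_def using ins.lpos_ins_other lam_nonneg bot_wins
  unfolding ins.lam_ins_def by auto

lemma subint_wt_eq: "subint pt' lam' wt = {lpos pt lam wb + lam wb - lam wt..<lpos pt lam wb + lam wb}"
  unfolding subint_def ins.lpos_ins_loser unfolding ins.lam_ins_def
  using wt_neq_wb by (simp add: algebra_simps)

lemma subint_wt_subset: "subint pt' lam' wt \<subseteq> subint pt lam wb"
  unfolding subint_wt_eq unfolding subint_def using lam_pos bot_wins by auto

lemma T'_eq: "z \<in> subint pt' lam' a \<Longrightarrow> T' z = z + lpos pb lam a - lpos pt' lam' a"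
  using iet_map_eq[OF inj_pt' lam'_nonneg] lpos_pb_lam' by simp

lemma T_on_wb: "z \<in> subint pt lam wb \<Longrightarrow> T z = z + (L - lam wb) - lpos pt lam wb"
  using T_eq lpos_wb by simp

lemma T'_other:
  assumes a: "a \<noteq> wt" and z: "z \<in> subint pt' lam' a"
  shows "T z \<in> {0..<L'} \<and> T' z = T z"
proof
  have z0: "z \<in> subint pt lam a" using subint_other_subset[OF a] z by blast
  show "T' z = T z" using T'_eq[OF z] ins.lpos_ins_other[OF a] T_eq[OF z0] by simp
  show "T z \<in> {0..<L'}"
  proof (cases "a = wb")
    case False
    have "T z \<notin> subint pb lam wb"
      using T_subint[OF z0] subint_disjoint[OF inj_pb lam_nonneg False] by blast
    thus ?thesis using T_subint_range[OF z0] subint_pb_wb L'_eq bot_wins by auto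
  next
    case True
    have "z < lpos pt lam wb + lam wb - lam wt"
      using z True ins.lpos_ins_other[OF a] unfolding subint_def ins.lam_ins_def by simp
    thus ?thesis using T_on_wb[of z] T_subint_range[OF z0] z0 True L'_eq by simp
  qed
qed

lemma T'_wt:
  assumes z: "z \<in> subint pt' lam' wt"
  shows "T z \<in> subint pt lam wt \<and> T z \<notin> {0..<L'} \<and> T' z = T (T z)"
proof (intro conjI)
  have Tz: "T z = z + (L - lam wb) - lpos pt lam wb" using T_on_wb subint_wt_subset z by blast
  show Tzt: "T z \<in> subint pt lam wt" using Tz z subint_wt_eq subint_pt_wt by auto
  show "T z \<notin> {0..<L'}" using Tzt subint_pt_wt L'_eq by auto
  have "T (T z) = T z + lpos pb lam wt - (L - lam wt)" using T_eq[OF Tzt] lpos_wt by simp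
  moreover have "T' z = z + lpos pb lam wt - (lpos pt lam wb + lam' wb)"
    using T'_eq[OF z] ins.lpos_ins_loser by simp
  ultimately show "T' z = T (T z)" using Tz unfolding ins.lam_ins_def using wt_neq_wb by simp
qed

lemma T'_one_or_two: "z \<in> {0..<L'} \<Longrightarrow> T' z \<in> {0..<L'} \<and> (T' z = T z \<or> T' z = T (T z))"
proof -
  assume z: "z \<in> {0..<L'}"
  then obtain a where "z \<in> subint pt' lam' a" using subint_cover[OF ins.bij_ins lam'_nonneg] by auto
  thus ?thesis using iet_map_range[OF ins.bij_ins lam'_nonneg z] T'_other T'_wt by metis
qed

lemma lpos_pt'_in: "lpos pt' lam' a \<in> {0..<L'}"
  using subint_subset[OF lam'_nonneg, of pt' a] lam'_pos unfolding subint_def by fastforce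

lemma T_lpos_wt: "T (lpos pt' lam' wt) = lpos pt lam wt"
proof -
  have "lpos pt' lam' wt \<in> subint pt lam wb"
    using subint_wt_subset lam'_pos unfolding subint_def by fastforce
  thus ?thesis using T_on_wb ins.lpos_ins_loser lpos_wt unfolding ins.lam_ins_def
    using wt_neq_wb by simp
qed

lemma orbit_from_new_endpoint:
  assumes a: "pt' a \<noteq> 0" and m: "m \<ge> 1"
  shows "\<exists>a0 M. pt a0 \<noteq> 0 \<and> M \<ge> 1 \<and> (T' ^^ m) (lpos pt' lam' a) = (T ^^ M) (lpos pt lam a0)"
proof (cases "a = wt")
  case False
  obtain M where M: "M \<ge> m" "(T' ^^ m) (lpos pt' lam' a) = (T ^^ M) (lpos pt' lam' a)"
    using funpow_one_or_two_steps[of "{0..<L'}" T' T, OF T'_one_or_two lpos_pt'_in] by blast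
  have "pt a \<noteq> 0" using a ins.ins_eq_0_iff[OF False] by simp
  thus ?thesis using M m ins.lpos_ins_other[OF False] by (intro exI[of _ a] exI[of _ M]) simp
next
  case True
  let ?e = "lpos pt' lam' wt"
  obtain k where k: "m = Suc k" using m by (cases m) auto
  have "?e \<in> subint pt' lam' wt" unfolding subint_def using lam'_pos by simp
  hence T'e: "T' ?e = T (T ?e)" using T'_wt by blast
  have "T' ?e \<in> {0..<L'}" using T'_one_or_two[OF lpos_pt'_in] by blast
  then obtain M where M: "(T' ^^ k) (T' ?e) = (T ^^ M) (T' ?e)"
    using funpow_one_or_two_steps[of "{0..<L'}" T' T, OF T'_one_or_two] by blast
  have "(T' ^^ m) ?e = (T ^^ Suc M) (lpos pt lam wt)"
    using M k T'e T_lpos_wt by (simp add: funpow_Suc_right del: funpow.simps)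
  thus ?thesis using True pt_wt_neq_0 by (intro exI[of _ wt] exI[of _ "Suc M"]) simp
qed

lemma keane': "keane pt' pb lam'"
  unfolding keane_def
proof (intro allI impI notI)
  fix a b m assume a: "pt' a \<noteq> 0" and b: "pt' b \<noteq> 0" and m: "(m::nat) \<ge> 1"
    and eq: "(T' ^^ m) (lpos pt' lam' a) = lpos pt' lam' b"
  obtain a0 M where aM: "pt a0 \<noteq> 0" "M \<ge> 1" "(T' ^^ m) (lpos pt' lam' a) = (T ^^ M) (lpos pt lam a0)"
    using orbit_from_new_endpoint[OF a m] by blast
  show False
  proof (cases "b = wt")
    case False
    have "pt b \<noteq> 0" using b ins.ins_eq_0_iff[OF False] by simp
    thus False using keaneD[OF keane aM(1) _ aM(2)] eq aM(3) ins.lpos_ins_other[OF False] by simp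
  next
    case True
    have "(T ^^ Suc M) (lpos pt lam a0) = lpos pt lam wt"
      using eq aM(3) True T_lpos_wt by simp
    thus False using keaneD[OF keane aM(1) pt_wt_neq_0, of "Suc M"] by simp
  qed
qed

lemma T_onto_cut: "{0..<L} - {0..<L'} \<subseteq> T ` {0..<L'}"
proof
  fix u assume "u \<in> {0..<L} - {0..<L'}"
  hence u: "u \<in> {L'..<L}" by auto
  let ?z = "u - (L - lam wb) + lpos pt lam wb"
  have z0: "?z \<in> subint pt lam wb" using u L'_eq bot_wins unfolding subint_def by auto
  have "?z \<in> {0..<L'}"
    using z0 lpos_wb_le lpos_nonneg[OF lam_nonneg, of pt wb] L'_eq u unfolding subint_def by auto
  thus "u \<in> T ` {0..<L'}" using T_on_wb[OF z0] by force
qed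

lemma rv_step_eq: "rv_step (pt, pb, lam) = (pt', pb, lam')"
  using bot_wins unfolding ins.p_ins_def ins.lam_ins_def unfolding rv_step_def Let_def wt_def wb_def
  by simp

lemma refines: "rv_refines (pt, pb, lam) (pt', pb, lam')"
proof -
  have "\<exists>b. subint pt' lam' a \<subseteq> subint pt lam b" for a
    using subint_other_subset subint_wt_subset by (cases "a = wt") blast+
  moreover have "(\<forall>z\<in>subint pt' lam' a. T z \<in> {0..<L'} \<and> T' z = T z) \<or>
      (\<exists>w. \<forall>z\<in>subint pt' lam' a. T z \<in> subint pt lam w \<and> T z \<notin> {0..<L'} \<and> T' z = T (T z))"
    for a
    using T'_other T'_wt by (cases "a = wt") blast+
  moreover have "{0..<L'} \<subseteq> {0..<L}" using L'_eq lam_nonneg by auto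
  ultimately show ?thesis
    unfolding rv_refines_def keane_data_def base_def cell_def T0_def prod.case
    using pos_iet' keane' T_onto_cut by blast
qed

end

lemma rv_step_refines:
  assumes "keane_data S"
  shows "rv_refines S (rv_step S)"
proof -
  obtain pt pb lam where S: "S = (pt, pb, lam)" and k: "keane_iet pt pb lam"
    using assms by (rule keane_data_cases)
  interpret keane_iet pt pb lam by (fact k)
  show ?thesis
  proof (cases "lam wb < lam wt")
    case True
    interpret rv_top_step pt pb lam by unfold_locales (fact True)
    show ?thesis using refines rv_step_eq S by simp
  next
    case False
    hence "lam wt < lam wb" using lam_wt_neq_lam_wb by simp
    interpret rv_bot_step pt pb lam by unfold_locales fact
    show ?thesis using refines rv_step_eq S by simp
  qed
qed

section \<open>First returns and induced maps\<close>

definition returns_at :: "('a \<Rightarrow> 'a) \<Rightarrow> 'a set \<Rightarrow> 'a \<Rightarrow> nat \<Rightarrow> bool" where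
  "returns_at F A x h \<longleftrightarrow> 0 < h \<and> (F ^^ h) x \<in> A \<and> (\<forall>j. 0 < j \<and> j < h \<longrightarrow> (F ^^ j) x \<notin> A)"

definition first_return :: "('a \<Rightarrow> 'a) \<Rightarrow> 'a set \<Rightarrow> 'a \<Rightarrow> nat" where
  "first_return F A x = (LEAST j. 0 < j \<and> (F ^^ j) x \<in> A)"

lemma first_return_eqI: "returns_at F A x h \<Longrightarrow> first_return F A x = h"
  unfolding first_return_def
proof (rule Least_equality)
  assume r: "returns_at F A x h"
  thus "0 < h \<and> (F ^^ h) x \<in> A" unfolding returns_at_def by blast
  fix y assume y: "0 < y \<and> (F ^^ y) x \<in> A"
  show "h \<le> y"
  proof (rule ccontr)
    assume "\<not> h \<le> y"
    hence "y < h" by simp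
    thus False using r y unfolding returns_at_def by blast
  qed
qed

definition induced :: "('a \<Rightarrow> 'a) \<Rightarrow> 'a set \<Rightarrow> ('a \<Rightarrow> 'a) \<Rightarrow> bool" where
  "induced F A G \<longleftrightarrow> (\<forall>x\<in>A. G x \<in> A \<and> returns_at F A x (first_return F A x) \<and> (F ^^ first_return F A x) x = G x)"

text \<open>\<open>hit_time F A G x i\<close> is the time at which the \<open>F\<close>-orbit of \<open>x\<close> reaches \<open>(G ^^ i) x\<close>, the
  \<open>i\<close>-th return to \<open>A\<close> when \<open>G\<close> is the map induced on \<open>A\<close>.\<close>
primrec hit_time :: "('a \<Rightarrow> 'a) \<Rightarrow> 'a set \<Rightarrow> ('a \<Rightarrow> 'a) \<Rightarrow> 'a \<Rightarrow> nat \<Rightarrow> nat" where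
  "hit_time F A G x 0 = 0"
| "hit_time F A G x (Suc i) = hit_time F A G x i + first_return F A ((G ^^ i) x)"

lemma funpow_add_apply: "(f ^^ (m + n)) x = (f ^^ m) ((f ^^ n) x)"
  by (simp add: funpow_add)

lemma induced_funpow_in: "induced F A G \<Longrightarrow> x \<in> A \<Longrightarrow> (G ^^ i) x \<in> A"
  by (induction i) (auto simp: induced_def)

lemma first_return_pos: "induced F A G \<Longrightarrow> x \<in> A \<Longrightarrow> first_return F A x > 0"
  unfolding induced_def returns_at_def by blast

lemma funpow_first_return: "induced F A G \<Longrightarrow> x \<in> A \<Longrightarrow> (F ^^ first_return F A x) x = G x"
  unfolding induced_def by blast

lemma funpow_before_first_return: "induced F A G \<Longrightarrow> x \<in> A \<Longrightarrow> 0 < j \<Longrightarrow> j < first_return F A x \<Longrightarrow> (F ^^ j) x \<notin> A"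
  unfolding induced_def returns_at_def by blast

lemma funpow_hit_time:
  assumes "induced F A G" "x \<in> A"
  shows "(F ^^ hit_time F A G x i) x = (G ^^ i) x"
proof (induction i)
  case (Suc i)
  have "(F ^^ hit_time F A G x (Suc i)) x = (F ^^ first_return F A ((G ^^ i) x)) ((F ^^ hit_time F A G x i) x)"
    by (simp only: hit_time.simps add.commute[of "hit_time F A G x i"] funpow_add_apply)
  also have "\<dots> = G ((G ^^ i) x)" using Suc funpow_first_return[OF assms(1) induced_funpow_in[OF assms]] by simp
  finally show ?case by simp
qed simp

lemma strict_mono_hit_time:
  assumes "induced F A G" "x \<in> A"
  shows "strict_mono (hit_time F A G x)"
  by (rule strict_monoI_Suc) (simp add: first_return_pos[OF assms(1) induced_funpow_in[OF assms]])

lemma hit_time_mono: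
  "induced F A G \<Longrightarrow> x \<in> A \<Longrightarrow> i \<le> k \<Longrightarrow> hit_time F A G x i \<le> hit_time F A G x k"
  by (simp add: strict_mono_less_eq[OF strict_mono_hit_time])

lemma hit_time_less:
  "induced F A G \<Longrightarrow> x \<in> A \<Longrightarrow> i < k \<Longrightarrow> hit_time F A G x i < hit_time F A G x k"
  by (simp add: strict_mono_less[OF strict_mono_hit_time])

lemma hit_time_ge: "induced F A G \<Longrightarrow> x \<in> A \<Longrightarrow> i \<le> hit_time F A G x i"
  by (rule strict_mono_imp_increasing[OF strict_mono_hit_time])

lemma hit_time_bracket:
  assumes "induced F A G" "x \<in> A"
  shows "\<exists>i. hit_time F A G x i \<le> j \<and> j < hit_time F A G x (Suc i)"
proof -
  let ?r = "hit_time F A G x"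
  have "\<exists>i. j < ?r i" using hit_time_ge[OF assms, of "Suc j"] by (intro exI[of _ "Suc j"]) simp
  then obtain k where k: "j < ?r k" by blast
  define i where "i = (LEAST i. j < ?r i)"
  have ji: "j < ?r i" unfolding i_def using k by (rule LeastI)
  have i0: "i \<noteq> 0" using ji by (cases i) auto
  then obtain i' where i': "i = Suc i'" by (cases i) auto
  have "i' < i" using i' by simp
  hence "\<not> j < ?r i'" unfolding i_def by (rule not_less_Least)
  thus ?thesis using ji i' by (intro exI[of _ i']) simp
qed

lemma funpow_from_hit_time:
  assumes "induced F A G" "x \<in> A" "hit_time F A G x i \<le> j"
  shows "(F ^^ j) x = (F ^^ (j - hit_time F A G x i)) ((G ^^ i) x)"
proof -
  have "(F ^^ j) x = (F ^^ (j - hit_time F A G x i + hit_time F A G x i)) x"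
    using assms(3) by simp
  hence "(F ^^ j) x = (F ^^ (j - hit_time F A G x i)) ((F ^^ hit_time F A G x i) x)"
    by (simp only: funpow_add_apply)
  thus ?thesis using funpow_hit_time[OF assms(1,2)] by simp
qed

lemma visit_is_hit_time:
  assumes "induced F A G" "x \<in> A" "(F ^^ j) x \<in> A"
  shows "\<exists>i. j = hit_time F A G x i"
proof -
  obtain i where i: "hit_time F A G x i \<le> j" "j < hit_time F A G x (Suc i)" using hit_time_bracket[OF assms(1,2)] by blast
  show ?thesis
  proof (cases "j = hit_time F A G x i")
    case False
    let ?y = "(G ^^ i) x"
    have y: "?y \<in> A" using induced_funpow_in[OF assms(1,2)] .
    have "(F ^^ (j - hit_time F A G x i)) ?y \<in> A" using funpow_from_hit_time[OF assms(1,2) i(1)] assms(3) by simp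
    moreover have "0 < j - hit_time F A G x i" "j - hit_time F A G x i < first_return F A ?y" using False i by auto
    ultimately show ?thesis using funpow_before_first_return[OF assms(1) y] by blast
  qed blast
qed

lemma first_return_nested:
  assumes "induced F A G" "B \<subseteq> A" "induced G B G2" "x \<in> B"
  shows "returns_at F B x (hit_time F A G x (first_return G B x)) \<and> first_return F B x = hit_time F A G x (first_return G B x)"
proof -
  have xA: "x \<in> A" using assms by blast
  let ?H = "first_return G B x"
  have retG: "returns_at G B x ?H" using assms(3,4) unfolding induced_def by blast
  have "returns_at F B x (hit_time F A G x ?H)"
    unfolding returns_at_def
  proof (intro conjI allI impI)
    show "0 < hit_time F A G x ?H" using hit_time_less[OF assms(1) xA, of 0 ?H] retG unfolding returns_at_def by simp
    show "(F ^^ hit_time F A G x ?H) x \<in> B" using funpow_hit_time[OF assms(1) xA] retG unfolding returns_at_def by simp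
    fix j assume j: "0 < j \<and> j < hit_time F A G x ?H"
    show "(F ^^ j) x \<notin> B"
    proof
      assume jB: "(F ^^ j) x \<in> B"
      then obtain i where i: "j = hit_time F A G x i" using visit_is_hit_time[OF assms(1) xA] assms(2) by blast
      have "i < ?H" using j i hit_time_mono[OF assms(1) xA, of ?H i] by (cases "i < ?H") auto
      moreover have "i > 0" using j i by (cases i) auto
      ultimately have "(G ^^ i) x \<notin> B" using retG unfolding returns_at_def by blast
      thus False using jB i funpow_hit_time[OF assms(1) xA] by simp
    qed
  qed
  thus ?thesis by (simp add: first_return_eqI)
qed

lemma induced_trans:
  assumes "induced F A G" "B \<subseteq> A" "induced G B G2"
  shows "induced F B G2"
  unfolding induced_def
proof
  fix x assume x: "x \<in> B"
  have xA: "x \<in> A" using assms x by blast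
  have c: "returns_at F B x (hit_time F A G x (first_return G B x))" "first_return F B x = hit_time F A G x (first_return G B x)"
    using first_return_nested[OF assms x] by blast+
  have "(F ^^ first_return F B x) x = (G ^^ first_return G B x) x" using c(2) funpow_hit_time[OF assms(1) xA] by simp
  also have "\<dots> = G2 x" using assms(3) x unfolding induced_def by blast
  finally show "G2 x \<in> B \<and> returns_at F B x (first_return F B x) \<and> (F ^^ first_return F B x) x = G2 x"
    using c assms(3) x unfolding induced_def by simp
qed

lemma card_visits_hit_time:
  assumes "induced F A G" "x \<in> A" "C \<subseteq> A"
  shows "card {j. j < hit_time F A G x H \<and> (F ^^ j) x \<in> C} = card {i. i < H \<and> (G ^^ i) x \<in> C}"
proof -
  let ?r = "hit_time F A G x"
  have "{j. j < ?r H \<and> (F ^^ j) x \<in> C} = ?r ` {i. i < H \<and> (G ^^ i) x \<in> C}"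
  proof (rule set_eqI, rule iffI)
    fix j assume "j \<in> {j. j < ?r H \<and> (F ^^ j) x \<in> C}"
    hence j: "j < ?r H" "(F ^^ j) x \<in> C" by auto
    then obtain i where i: "j = ?r i" using visit_is_hit_time[OF assms(1,2)] assms(3) by blast
    have "i < H" using j(1) i hit_time_mono[OF assms(1,2), of H i] by (cases "i < H") auto
    thus "j \<in> ?r ` {i. i < H \<and> (G ^^ i) x \<in> C}" using i j(2) funpow_hit_time[OF assms(1,2)] by auto
  next
    fix j assume "j \<in> ?r ` {i. i < H \<and> (G ^^ i) x \<in> C}"
    then obtain i where "j = ?r i" "i < H" "(G ^^ i) x \<in> C" by auto
    thus "j \<in> {j. j < ?r H \<and> (F ^^ j) x \<in> C}"
      using hit_time_less[OF assms(1,2)] funpow_hit_time[OF assms(1,2)] by auto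
  qed
  moreover have "inj_on ?r {i. i < H \<and> (G ^^ i) x \<in> C}"
    using strict_mono_hit_time[OF assms(1,2)] strict_mono_imp_inj_on by blast
  ultimately show ?thesis by (simp add: card_image)
qed

lemma sum_lessThan_add: "(\<Sum>j<a+b. f j) = (\<Sum>j<a. f j) + (\<Sum>j<b. f (a + j)) " for f :: "nat \<Rightarrow> 'b::comm_monoid_add"
  by (induction b) (simp_all add: add_Suc_right add.assoc)

lemma sum_upto_hit_time:
  fixes g :: "'a \<Rightarrow> 'b::comm_monoid_add"
  assumes "induced F A G" "x \<in> A"
  shows "(\<Sum>j<hit_time F A G x H. g ((F ^^ j) x)) =
         (\<Sum>i<H. \<Sum>j<first_return F A ((G ^^ i) x). g ((F ^^ j) ((G ^^ i) x)))"
proof (induction H)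
  case (Suc H)
  have "(\<Sum>j<hit_time F A G x (Suc H). g ((F ^^ j) x)) =
      (\<Sum>j<hit_time F A G x H. g ((F ^^ j) x)) + (\<Sum>j<first_return F A ((G ^^ H) x). g ((F ^^ (hit_time F A G x H + j)) x))"
    unfolding hit_time.simps by (rule sum_lessThan_add)
  also have "(\<Sum>j<first_return F A ((G ^^ H) x). g ((F ^^ (hit_time F A G x H + j)) x)) =
             (\<Sum>j<first_return F A ((G ^^ H) x). g ((F ^^ j) ((G ^^ H) x)))"
  proof (rule sum.cong)
    fix j
    have "(F ^^ (hit_time F A G x H + j)) x = (F ^^ j) ((F ^^ hit_time F A G x H) x)"
      by (metis add.commute funpow_add_apply)
    thus "g ((F ^^ (hit_time F A G x H + j)) x) = g ((F ^^ j) ((G ^^ H) x))"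
      using funpow_hit_time[OF assms] by simp
  qed simp
  finally show ?case using Suc by simp
qed simp

definition same_itinerary :: "('a \<Rightarrow> 'a) \<Rightarrow> 'a set \<Rightarrow> ('b \<Rightarrow> 'a set) \<Rightarrow> 'a \<Rightarrow> 'a \<Rightarrow> bool" where
  "same_itinerary F A P x y \<longleftrightarrow> first_return F A x = first_return F A y \<and> (\<forall>j<first_return F A x. \<exists>b. (F ^^ j) x \<in> P b \<and> (F ^^ j) y \<in> P b)"

lemma same_itinerary_hit_time:
  assumes "induced F A G" "x \<in> A" "y \<in> A" "\<And>i. i < H \<Longrightarrow> same_itinerary F A P ((G ^^ i) x) ((G ^^ i) y)"
  shows "(\<forall>i\<le>H. hit_time F A G x i = hit_time F A G y i) \<and>
         (\<forall>j<hit_time F A G x H. \<exists>b. (F ^^ j) x \<in> P b \<and> (F ^^ j) y \<in> P b)"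
proof -
  have eq: "\<forall>i\<le>H. hit_time F A G x i = hit_time F A G y i"
  proof (intro allI impI)
    fix i assume "i \<le> H"
    thus "hit_time F A G x i = hit_time F A G y i"
    proof (induction i)
      case (Suc i)
      thus ?case using assms(4)[of i] unfolding same_itinerary_def by simp
    qed simp
  qed
  moreover have "\<forall>j<hit_time F A G x H. \<exists>b. (F ^^ j) x \<in> P b \<and> (F ^^ j) y \<in> P b"
  proof (intro allI impI)
    fix j assume j: "j < hit_time F A G x H"
    obtain i where i: "hit_time F A G x i \<le> j" "j < hit_time F A G x (Suc i)" using hit_time_bracket[OF assms(1,2)] by blast
    have iH: "i < H" using j i(1) hit_time_mono[OF assms(1,2), of H i] by (cases "i < H") auto
    have ie: "hit_time F A G x i = hit_time F A G y i" using eq iH by simp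
    have e: "same_itinerary F A P ((G ^^ i) x) ((G ^^ i) y)" using assms(4)[OF iH] .
    have lt: "j - hit_time F A G x i < first_return F A ((G ^^ i) x)" using i by simp
    obtain b where b: "(F ^^ (j - hit_time F A G x i)) ((G ^^ i) x) \<in> P b"
                      "(F ^^ (j - hit_time F A G x i)) ((G ^^ i) y) \<in> P b"
      using e lt unfolding same_itinerary_def by blast
    have "(F ^^ j) x = (F ^^ (j - hit_time F A G x i)) ((G ^^ i) x)" using funpow_from_hit_time[OF assms(1,2) i(1)] .
    moreover have "(F ^^ j) y = (F ^^ (j - hit_time F A G x i)) ((G ^^ i) y)"
      using funpow_from_hit_time[OF assms(1,3), of i j] i(1) ie by simp
    ultimately show "\<exists>b. (F ^^ j) x \<in> P b \<and> (F ^^ j) y \<in> P b" using b by auto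
  qed
  ultimately show ?thesis by blast
qed

lemma funpow_within_hit_block:
  assumes "induced F A G" "z \<in> A" "(G ^^ h) z = y" "j < first_return F A y" "(F ^^ j) y = x"
  shows "(F ^^ (hit_time F A G z h + j)) z = x \<and> hit_time F A G z h + j < hit_time F A G z (Suc h)"
proof -
  have "(F ^^ (hit_time F A G z h + j)) z = (F ^^ j) ((F ^^ hit_time F A G z h) z)"
    by (simp only: add.commute[of "hit_time F A G z h"] funpow_add_apply)
  thus ?thesis using funpow_hit_time[OF assms(1,2)] assms by simp
qed

lemma same_itinerary_induced_trans:
  assumes "induced F A G" "B \<subseteq> A" "induced G B G'" "x \<in> B" "y \<in> B"
    and "first_return G B y = first_return G B x"
    and "\<And>i. i < first_return G B x \<Longrightarrow> same_itinerary F A P ((G ^^ i) x) ((G ^^ i) y)"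
  shows "same_itinerary F B P x y"
proof -
  let ?H = "first_return G B x"
  have xA: "x \<in> A" and yA: "y \<in> A" using assms(2,4,5) by blast+
  have "first_return F B x = hit_time F A G x ?H"
    using first_return_nested[OF assms(1-4)] by simp
  moreover have "first_return F B y = hit_time F A G y ?H"
    using first_return_nested[OF assms(1-3,5)] assms(6) by simp
  ultimately show ?thesis
    using same_itinerary_hit_time[OF assms(1) xA yA assms(7)] unfolding same_itinerary_def by simp
qed

definition tower_covers :: "('a \<Rightarrow> 'a) \<Rightarrow> 'a set \<Rightarrow> 'a set \<Rightarrow> bool" where
  "tower_covers F A X \<longleftrightarrow> (\<forall>x\<in>X. \<exists>y\<in>A. \<exists>j<first_return F A y. (F ^^ j) y = x)"

lemma tower_covers_trans:
  assumes "induced F A G" "B \<subseteq> A" "induced G B G'"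
    and "tower_covers F A X" "tower_covers G B A"
  shows "tower_covers F B X"
  unfolding tower_covers_def
proof
  fix x assume "x \<in> X"
  then obtain y j where y: "y \<in> A" "j < first_return F A y" "(F ^^ j) y = x"
    using assms(4) unfolding tower_covers_def by blast
  then obtain z h where z: "z \<in> B" "h < first_return G B z" "(G ^^ h) z = y"
    using assms(5) unfolding tower_covers_def by blast
  have zA: "z \<in> A" using assms(2) z(1) by blast
  have c: "(F ^^ (hit_time F A G z h + j)) z = x \<and> hit_time F A G z h + j < hit_time F A G z (Suc h)"
    using funpow_within_hit_block[OF assms(1) zA z(3) y(2,3)] .
  have "hit_time F A G z (Suc h) \<le> hit_time F A G z (first_return G B z)"
    using hit_time_mono[OF assms(1) zA] z(2) by (simp del: hit_time.simps)
  also have "\<dots> = first_return F B z" using first_return_nested[OF assms(1-3) z(1)] by simp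
  finally have "hit_time F A G z h + j < first_return F B z" using c by linarith
  thus "\<exists>z\<in>B. \<exists>j<first_return F B z. (F ^^ j) z = x" using c z(1) by blast
qed

lemma same_itinerary_visits:
  assumes "same_itinerary F A P x y" "\<And>u v. u \<noteq> v \<Longrightarrow> P u \<inter> P v = {}"
  shows "{i. i < first_return F A x \<and> (F ^^ i) x \<in> P b} = {i. i < first_return F A y \<and> (F ^^ i) y \<in> P b}"
proof -
  have "(F ^^ i) x \<in> P b \<longleftrightarrow> (F ^^ i) y \<in> P b" if i: "i < first_return F A x" for i
  proof -
    obtain c where "(F ^^ i) x \<in> P c" "(F ^^ i) y \<in> P c"
      using assms(1) i unfolding same_itinerary_def by blast
    thus ?thesis using assms(2)[of b c] by (cases "b = c") auto
  qed
  moreover have "first_return F A x = first_return F A y" using assms(1) unfolding same_itinerary_def by blast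
  ultimately show ?thesis by auto
qed

lemma sum_same_itinerary:
  assumes "same_itinerary F A P x y" "\<And>b z. z \<in> P b \<Longrightarrow> g z = c b" "i \<le> first_return F A x"
  shows "(\<Sum>j<i. g ((F ^^ j) x)) = (\<Sum>j<i. g ((F ^^ j) y))"
proof (rule sum.cong)
  fix j assume "j \<in> {..<i}"
  hence "j < first_return F A x" using assms(3) by simp
  then obtain b where "(F ^^ j) x \<in> P b" "(F ^^ j) y \<in> P b"
    using assms(1) unfolding same_itinerary_def by blast
  thus "g ((F ^^ j) x) = g ((F ^^ j) y)" using assms(2) by simp
qed simp

lemma card_eq_sum_visits:
  fixes P :: "'b::finite \<Rightarrow> 'a set"
  assumes "\<And>u v. u \<noteq> v \<Longrightarrow> P u \<inter> P v = {}" "\<And>i. i < n \<Longrightarrow> \<exists>b. h i \<in> P b"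
  shows "n = (\<Sum>b\<in>UNIV. card {i. i < n \<and> h i \<in> P b})"
proof -
  have "{..<n} = (\<Union>b. {i. i < n \<and> h i \<in> P b})" using assms(2) by auto
  hence "card {..<n} = (\<Sum>b\<in>UNIV. card {i. i < n \<and> h i \<in> P b})"
    by (simp only:) (rule card_UN_disjoint, use assms(1) in auto)
  thus ?thesis by simp
qed

lemma sum_funpow_shift:
  fixes g :: "'a \<Rightarrow> 'b::comm_monoid_add"
  shows "(\<Sum>j<m. g ((F ^^ j) ((F ^^ i) y))) + (\<Sum>j<i. g ((F ^^ j) y)) =
    (\<Sum>j<m. g ((F ^^ j) y)) + (\<Sum>j<i. g ((F ^^ j) ((F ^^ m) y)))"
proof -
  have "(\<Sum>j<i + m. g ((F ^^ j) y)) = (\<Sum>j<i. g ((F ^^ j) y)) + (\<Sum>j<m. g ((F ^^ j) ((F ^^ i) y)))"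
    by (subst sum_lessThan_add) (simp add: funpow_add_apply add.commute)
  moreover have "(\<Sum>j<m + i. g ((F ^^ j) y)) = (\<Sum>j<m. g ((F ^^ j) y)) + (\<Sum>j<i. g ((F ^^ j) ((F ^^ m) y)))"
    by (subst sum_lessThan_add) (simp add: funpow_add_apply add.commute)
  ultimately show ?thesis by (simp add: add.commute)
qed

section \<open>Rauzy--Veech towers\<close>

lemma rv_refines_returns:
  assumes "rv_refines S S'"
  shows "(\<forall>z\<in>cell S' a. returns_at (T0 S) (base S') z 1 \<and> (T0 S ^^ 1) z = T0 S' z) \<or>
    (\<exists>w. \<forall>z\<in>cell S' a. returns_at (T0 S) (base S') z 2 \<and> (T0 S ^^ 2) z = T0 S' z \<and> T0 S z \<in> cell S w)"
proof (cases "\<forall>z\<in>cell S' a. T0 S z \<in> base S' \<and> T0 S' z = T0 S z")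
  case True
  thus ?thesis unfolding returns_at_def by auto
next
  case False
  then obtain w where w: "\<forall>z\<in>cell S' a. T0 S z \<in> cell S w \<and> T0 S z \<notin> base S' \<and> T0 S' z = T0 S (T0 S z)"
    using assms unfolding rv_refines_def by blast
  have kd: "keane_data S'" using assms unfolding rv_refines_def by blast
  have "returns_at (T0 S) (base S') z 2 \<and> (T0 S ^^ 2) z = T0 S' z \<and> T0 S z \<in> cell S w"
    if z: "z \<in> cell S' a" for z
  proof -
    have "T0 S' z \<in> base S'" using T0_base[OF kd] cell_subset_base[OF kd] z by blast
    thus ?thesis using w z unfolding returns_at_def by (auto simp: numeral_2_eq_2 less_Suc_eq)
  qed
  thus ?thesis by blast
qed

lemma rv_refines_induced:
  assumes "rv_refines S S'"
  shows "induced (T0 S) (base S') (T0 S')"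
  unfolding induced_def
proof
  fix x assume x: "x \<in> base S'"
  have kd: "keane_data S'" using assms unfolding rv_refines_def by blast
  obtain a where "x \<in> cell S' a" using base_covered_by_cells[OF kd x] by blast
  then obtain h where h: "returns_at (T0 S) (base S') x h" "(T0 S ^^ h) x = T0 S' x"
    using rv_refines_returns[OF assms, of a] by blast
  show "T0 S' x \<in> base S' \<and> returns_at (T0 S) (base S') x (first_return (T0 S) (base S') x) \<and>
      (T0 S ^^ first_return (T0 S) (base S') x) x = T0 S' x"
    using h first_return_eqI[OF h(1)] T0_base[OF kd x] by simp
qed

lemma rv_refines_first_return:
  assumes "rv_refines S S'"
  shows "(\<forall>z\<in>cell S' a. first_return (T0 S) (base S') z = 1) \<or>
    (\<exists>w. \<forall>z\<in>cell S' a. first_return (T0 S) (base S') z = 2 \<and> T0 S z \<in> cell S w)"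
  using rv_refines_returns[OF assms, of a] first_return_eqI by metis

text \<open>A point of the discarded part is the image of a point of the new base whose return takes
  two steps.\<close>
lemma rv_refines_covers:
  assumes "rv_refines S S'"
  shows "tower_covers (T0 S) (base S') (base S)"
  unfolding tower_covers_def
proof
  fix y assume y: "y \<in> base S"
  let ?F = "T0 S" and ?A = "base S'"
  have ind: "induced ?F ?A (T0 S')" using rv_refines_induced[OF assms] .
  show "\<exists>z\<in>?A. \<exists>h<first_return ?F ?A z. (?F ^^ h) z = y"
  proof (cases "y \<in> ?A")
    case True
    thus ?thesis using first_return_pos[OF ind True] by (intro bexI[of _ y] exI[of _ 0]) auto
  next
    case False
    then obtain z where z: "z \<in> ?A" "?F z = y" using assms y unfolding rv_refines_def by blast
    have r: "returns_at ?F ?A z (first_return ?F ?A z)" using ind z(1) unfolding induced_def by blast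
    have "first_return ?F ?A z \<noteq> 1" using r z False unfolding returns_at_def by auto
    moreover have "first_return ?F ?A z > 0" using r unfolding returns_at_def by blast
    ultimately show ?thesis using z by (intro bexI[of _ z] exI[of _ 1]) auto
  qed
qed

definition iet_tower :: "('a::finite) iet_data \<Rightarrow> 'a iet_data \<Rightarrow> bool" where
  "iet_tower S S' \<longleftrightarrow> base S' \<subseteq> base S \<and> induced (T0 S) (base S') (T0 S') \<and>
     (\<forall>a. \<forall>x\<in>cell S' a. \<forall>y\<in>cell S' a. same_itinerary (T0 S) (base S') (cell S) x y) \<and>
     tower_covers (T0 S) (base S') (base S)"

lemma iet_tower_refl:
  assumes "keane_data S"
  shows "iet_tower S S"
proof -
  let ?F = "T0 S" and ?A = "base S"
  have r1: "first_return ?F ?A x = 1 \<and> returns_at ?F ?A x 1" if "x \<in> ?A" for x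
  proof -
    have "returns_at ?F ?A x 1" using T0_base[OF assms that] unfolding returns_at_def by simp
    thus ?thesis by (simp add: first_return_eqI)
  qed
  have "induced ?F ?A ?F" unfolding induced_def using r1 T0_base[OF assms] by simp
  moreover have "same_itinerary ?F ?A (cell S) x y" if "x \<in> cell S a" "y \<in> cell S a" for a x y
  proof -
    have "first_return ?F ?A x = 1" "first_return ?F ?A y = 1"
      using r1 cell_subset_base[OF assms] that by blast+
    thus ?thesis using that unfolding same_itinerary_def by auto
  qed
  moreover have "tower_covers ?F ?A ?A"
    unfolding tower_covers_def using r1 by (metis funpow_0 zero_less_one)
  ultimately show ?thesis unfolding iet_tower_def by blast
qed

lemma iet_tower_rv_refines:
  assumes tower: "iet_tower S S'" and ref: "rv_refines S' S''"
  shows "iet_tower S S''"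
proof -
  let ?F = "T0 S" and ?A = "base S'" and ?G = "T0 S'" and ?B = "base S''"
  have ind: "induced ?F ?A ?G" and cov: "tower_covers ?F ?A (base S)" and sub0: "?A \<subseteq> base S"
    and itin: "\<And>a x y. x \<in> cell S' a \<Longrightarrow> y \<in> cell S' a \<Longrightarrow> same_itinerary ?F ?A (cell S) x y"
    using tower unfolding iet_tower_def by blast+
  have kd: "keane_data S''" and sub: "?B \<subseteq> ?A" and cells: "\<And>a. \<exists>b. cell S'' a \<subseteq> cell S' b"
    using ref unfolding rv_refines_def by blast+
  have ind1: "induced ?G ?B (T0 S'')" using rv_refines_induced[OF ref] .
  have "same_itinerary ?F ?B (cell S) x y" if x: "x \<in> cell S'' a" and y: "y \<in> cell S'' a" for a x y
  proof -
    have xB: "x \<in> ?B" and yB: "y \<in> ?B" using x y cell_subset_base[OF kd] by blast+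
    obtain b where "cell S'' a \<subseteq> cell S' b" using cells by blast
    hence e0: "same_itinerary ?F ?A (cell S) x y" using itin x y by blast
    consider "\<forall>z\<in>cell S'' a. first_return ?G ?B z = 1"
      | w where "\<forall>z\<in>cell S'' a. first_return ?G ?B z = 2 \<and> ?G z \<in> cell S' w"
      using rv_refines_first_return[OF ref] by blast
    thus ?thesis
    proof cases
      case 1
      show ?thesis
        by (rule same_itinerary_induced_trans[OF ind sub ind1 xB yB]) (use 1 e0 x y in auto)
    next
      case 2
      hence e1: "same_itinerary ?F ?A (cell S) (?G x) (?G y)" using itin x y by blast
      show ?thesis
        by (rule same_itinerary_induced_trans[OF ind sub ind1 xB yB])
          (use 2 e0 e1 x y in \<open>auto simp: less_2_cases_iff\<close>)
    qed
  qed
  thus ?thesis unfolding iet_tower_def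
    using sub sub0 induced_trans[OF ind sub ind1]
      tower_covers_trans[OF ind sub ind1 cov rv_refines_covers[OF ref]] by blast
qed

lemma rv_tower:
  assumes "keane_data S"
  shows "keane_data (rv S k) \<and> iet_tower S (rv S k)"
proof (induction k)
  case 0
  thus ?case using assms iet_tower_refl by simp
next
  case (Suc k)
  hence "rv_refines (rv S k) (rv S (Suc k))" using rv_step_refines[of "rv S k"] by simp
  thus ?case using Suc iet_tower_rv_refines unfolding rv_refines_def by blast
qed

lemma iet_towerD:
  assumes "iet_tower S S'"
  shows "base S' \<subseteq> base S" "induced (T0 S) (base S') (T0 S')"
    "\<And>a x y. x \<in> cell S' a \<Longrightarrow> y \<in> cell S' a \<Longrightarrow> same_itinerary (T0 S) (base S') (cell S) x y"
    "tower_covers (T0 S) (base S') (base S)"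
  using assms unfolding iet_tower_def by blast+

section \<open>Zorich times and incidence matrices\<close>

lemma rv_add: "rv S (a + b) = rv (rv S a) b"
  by (induction b) auto

lemma rv_winner_rv_step:
  assumes "top_type (rv_step S) = top_type S"
  shows "rv_winner (rv_step S) = rv_winner S"
  using assms by (cases S) (auto simp: rv_winner_def rv_step_def top_type_def Let_def)

lemma top_type_changes:
  fixes s :: "('a::finite) iet_data"
  assumes "inf_complete s" and "CARD('a) \<ge> 2"
  shows "\<exists>n>t0. top_type (rv s n) \<noteq> top_type (rv s t0)"
proof (rule ccontr)
  assume const: "\<not> ?thesis"
  have same: "top_type (rv s n) = top_type (rv s t0)" if "t0 \<le> n" for n
  proof (cases "n = t0")
    case False
    hence "t0 < n" using that by simp
    thus ?thesis using const by blast
  qed simp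
  let ?w = "rv_winner (rv s t0)"
  have winner: "rv_winner (rv s n) = ?w" if "t0 \<le> n" for n
    using that
  proof (induction n rule: dec_induct)
    case (step n)
    have "top_type (rv_step (rv s n)) = top_type (rv s n)"
      using same[of n] same[of "Suc n"] step.hyps by simp
    thus ?case using rv_winner_rv_step[of "rv s n"] step.IH by simp
  qed simp
  have "(UNIV :: 'a set) \<noteq> {?w}"
  proof
    assume u: "(UNIV :: 'a set) = {?w}"
    have "CARD('a) = card {?w}" by (subst u) (rule refl)
    thus False using assms(2) by simp
  qed
  then obtain a where a: "a \<noteq> ?w" by blast
  have "\<exists>\<^sub>\<infinity>n. rv_winner (rv s n) = a" using assms(1) unfolding inf_complete_def by blast
  then obtain n where n: "t0 \<le> n" "rv_winner (rv s n) = a" unfolding INFM_nat_le by blast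
  thus False using winner[OF n(1)] a by simp
qed

lemma strict_mono_ztime:
  fixes s :: "('a::finite) iet_data"
  assumes "inf_complete s" and "CARD('a) \<ge> 2"
  shows "strict_mono (ztime s)"
proof (rule strict_monoI_Suc)
  fix k
  let ?P = "\<lambda>n. ztime s k < n \<and> top_type (rv s n) \<noteq> top_type (rv s (ztime s k))"
  obtain n where "?P n" using top_type_changes[OF assms] by blast
  hence "?P (LEAST n. ?P n)" by (rule LeastI)
  thus "ztime s k < ztime s (Suc k)" by simp
qed

lemma base_zdata: "base (zdata s n) = {0..<ind_len s n}"
  unfolding base_def ind_len_def by (simp split: prod.split)

lemma cell_zdata: "cell (zdata s n) a = ind_sub s n a"
  unfolding ind_sub_def cell_def ..

lemma ret_time_eq: "ret_time s n x = first_return (T0 s) (base (zdata s n)) x"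
  unfolding ret_time_def first_return_def base_zdata ..

lemma ind_left_in_cell: "keane_data (zdata s n) \<Longrightarrow> ind_left s n a \<in> cell (zdata s n) a"
  unfolding ind_left_def cell_def keane_data_def pos_iet_def subint_def
  by (cases "zdata s n") auto

lemma Zmat_eq: "Zmat s m n a b = card {j. j < first_return (T0 s) (base (zdata s n)) (ind_left s n a) \<and>
     (T0 s ^^ j) (ind_left s n a) \<in> cell (zdata s m) b}"
  unfolding Zmat_def ret_time_eq cell_zdata ..

lemma zdata_0: "zdata s 0 = s" unfolding zdata_def by simp

lemma sum_if_card: "(\<Sum>j<(r::nat). if P j then c else 0) = (c::'a::comm_semiring_1) * of_nat (card {j. j < r \<and> P j})"
proof (induction r)
  case (Suc r)
  have "{j. j < Suc r \<and> P j} = (if P r then insert r {j. j < r \<and> P j} else {j. j < r \<and> P j})"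
    by (auto simp: less_Suc_eq)
  thus ?case using Suc by (simp add: algebra_simps)
qed simp

section \<open>Bounded Birkhoff sums under the BC condition\<close>

lemma strict_mono_add_le:
  fixes f :: "nat \<Rightarrow> nat"
  assumes "strict_mono f"
  shows "f k + j \<le> f (k + j)"
proof (induction j)
  case (Suc j)
  have "f (k + j) < f (k + Suc j)" using assms unfolding strict_mono_def by simp
  thus ?case using Suc by simp
qed simp

text \<open>The parts of the BC condition the argument uses.\<close>
locale bc_setting =
  fixes pt pb :: "'a::finite \<Rightarrow> nat" and lam :: "'a \<Rightarrow> real" and \<omega> :: "'a \<Rightarrow> real"
    and nk :: "nat \<Rightarrow> nat" and N K :: nat and V :: real
  assumes valid: "valid_iet pt pb lam" and keane_T0: "keane pt pb lam"
    and complete: "inf_complete (pt, pb, lam)"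
    and strict_mono_nk: "strict_mono nk"
    and Z_pos: "\<And>k a b. 1 \<le> Zmat (pt, pb, lam) (nk k) (nk k + N) a b"
    and Z_le: "\<And>k a b. Zmat (pt, pb, lam) (nk k) (nk k + N) a b \<le> K"
    and V_pos: "V > 0"
    and Z_bounded: "\<And>k v. v \<in> E_cs (pt, pb, lam) \<Longrightarrow>
      vnorm (matvec (Zmat (pt, pb, lam) 0 (nk k)) v) \<le> V * vnorm v"
    and omega: "\<omega> \<in> E_cs (pt, pb, lam)"
begin

abbreviation "s \<equiv> (pt, pb, lam)"
abbreviation "T \<equiv> T0 s"
abbreviation "Zd n \<equiv> zdata s n"
abbreviation "A n \<equiv> base (zdata s n)"
abbreviation "G n \<equiv> T0 (zdata s n)"
abbreviation "f \<equiv> f_iet pt lam \<omega>"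

lemma card_ge_2: "CARD('a) \<ge> 2"
  using valid unfolding valid_iet_def by blast

lemma keane_data_s: "keane_data s"
  using valid keane_T0 unfolding keane_data_def pos_iet_def valid_iet_def by simp

lemma base_s: "base s = {0..<1}"
  using valid unfolding base_def valid_iet_def by simp

lemma keane_data_zdata: "keane_data (Zd n)"
  using rv_tower[OF keane_data_s] unfolding zdata_def by blast

lemma tower_zdata: "iet_tower s (Zd n)"
  using rv_tower[OF keane_data_s] unfolding zdata_def by blast

lemma induced_zdata: "induced T (A n) (G n)"
  using iet_towerD(2)[OF tower_zdata] .

lemma tower_zdata_zdata:
  assumes "n \<le> n'"
  shows "iet_tower (Zd n) (Zd n')"
proof -
  have "ztime s n \<le> ztime s n'"
    using assms by (simp add: strict_mono_less_eq[OF strict_mono_ztime[OF complete card_ge_2]])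
  hence "Zd n' = rv (Zd n) (ztime s n' - ztime s n)" unfolding zdata_def rv_add[symmetric] by simp
  thus ?thesis using rv_tower[OF keane_data_zdata[of n]] by simp
qed

lemma base_zdata_antimono: "n \<le> n' \<Longrightarrow> A n' \<subseteq> A n"
  using iet_towerD(1)[OF tower_zdata_zdata] .

lemma f_on_cell: "z \<in> cell s b \<Longrightarrow> f z = \<omega> b"
  using f_iet_eq[of pt lam z b \<omega>] valid unfolding cell_def valid_iet_def bij_betw_def
  by (simp add: less_imp_le)

lemma block_sum_eq_matvec:
  assumes y: "y \<in> cell (Zd n) a"
  shows "(\<Sum>j<first_return T (A n) y. f ((T ^^ j) y)) = matvec (Zmat s 0 n) \<omega> a"
proof -
  let ?p = "ind_left s n a"
  let ?r = "first_return T (A n) ?p"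
  have same: "same_itinerary T (A n) (cell s) y ?p"
    using iet_towerD(3)[OF tower_zdata y ind_left_in_cell[OF keane_data_zdata]] .
  have r: "first_return T (A n) y = ?r" using same unfolding same_itinerary_def by simp
  have "(\<Sum>j<first_return T (A n) y. f ((T ^^ j) y)) = (\<Sum>j<first_return T (A n) y. f ((T ^^ j) ?p))"
    using sum_same_itinerary[where g = f and c = \<omega>, OF same f_on_cell] by simp
  also have "\<dots> = (\<Sum>j<?r. \<Sum>b\<in>UNIV. if (T ^^ j) ?p \<in> cell s b then \<omega> b else 0)"
    unfolding r f_iet_def cell_def by simp
  also have "\<dots> = (\<Sum>b\<in>UNIV. \<Sum>j<?r. if (T ^^ j) ?p \<in> cell s b then \<omega> b else 0)"
    by (rule sum.swap)
  also have "\<dots> = matvec (Zmat s 0 n) \<omega> a"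
    unfolding matvec_def Zmat_eq zdata_0 by (simp add: sum_if_card mult.commute)
  finally show ?thesis .
qed

definition "block_bound = V * vnorm \<omega>"

lemma block_bound_nonneg: "block_bound \<ge> 0"
  unfolding block_bound_def vnorm_def using V_pos by (simp add: sum_nonneg)

lemma block_sum_bound:
  assumes y: "y \<in> A (nk k)"
  shows "\<bar>\<Sum>j<first_return T (A (nk k)) y. f ((T ^^ j) y)\<bar> \<le> block_bound"
proof -
  obtain a where a: "y \<in> cell (Zd (nk k)) a" using base_covered_by_cells[OF keane_data_zdata y] by blast
  have "\<bar>matvec (Zmat s 0 (nk k)) \<omega> a\<bar> \<le> vnorm (matvec (Zmat s 0 (nk k)) \<omega>)"
    unfolding vnorm_def by (rule member_le_sum) auto
  also have "\<dots> \<le> block_bound" unfolding block_bound_def using Z_bounded omega by blast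
  finally show ?thesis using block_sum_eq_matvec[OF a] by simp
qed

lemma card_visits_eq_Zmat:
  assumes nn: "n \<le> n'" and y: "y \<in> cell (Zd n') c"
  shows "card {i. i < first_return (G n) (A n') y \<and> (G n ^^ i) y \<in> cell (Zd n) b} = Zmat s n n' c b"
proof -
  let ?p = "ind_left s n' c"
  let ?H = "first_return (G n) (A n') ?p"
  have p: "?p \<in> cell (Zd n') c" using ind_left_in_cell[OF keane_data_zdata] .
  have pA': "?p \<in> A n'" using cell_subset_base[OF keane_data_zdata] p by blast
  have sub: "A n' \<subseteq> A n" using base_zdata_antimono[OF nn] .
  have tower: "iet_tower (Zd n) (Zd n')" using tower_zdata_zdata[OF nn] .
  have "Zmat s n n' c b = card {j. j < first_return T (A n') ?p \<and> (T ^^ j) ?p \<in> cell (Zd n) b}"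
    unfolding Zmat_eq ..
  also have "first_return T (A n') ?p = hit_time T (A n) (G n) ?p ?H"
    using first_return_nested[OF induced_zdata sub iet_towerD(2)[OF tower] pA'] by blast
  also have "card {j. j < hit_time T (A n) (G n) ?p ?H \<and> (T ^^ j) ?p \<in> cell (Zd n) b}
      = card {i. i < ?H \<and> (G n ^^ i) ?p \<in> cell (Zd n) b}"
    using card_visits_hit_time[OF induced_zdata _ cell_subset_base[OF keane_data_zdata]] pA' sub
    by blast
  also have "{i. i < ?H \<and> (G n ^^ i) ?p \<in> cell (Zd n) b} =
      {i. i < first_return (G n) (A n') y \<and> (G n ^^ i) y \<in> cell (Zd n) b}"
    using same_itinerary_visits[OF iet_towerD(3)[OF tower p y] cell_disjoint[OF keane_data_zdata]] .
  finally show ?thesis by simp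
qed

lemma first_return_eq_sum_Zmat:
  assumes nn: "n \<le> n'" and w: "w \<in> cell (Zd n') c"
  shows "first_return (G n) (A n') w = (\<Sum>b\<in>UNIV. Zmat s n n' c b)"
proof -
  have "w \<in> A n" using base_zdata_antimono[OF nn] cell_subset_base[OF keane_data_zdata] w by blast
  hence "\<exists>b. (G n ^^ i) w \<in> cell (Zd n) b" for i
    using base_covered_by_cells[OF keane_data_zdata] induced_funpow_in[OF induced_zdata] by blast
  hence "first_return (G n) (A n') w =
      (\<Sum>b\<in>UNIV. card {i. i < first_return (G n) (A n') w \<and> (G n ^^ i) w \<in> cell (Zd n) b})"
    by (intro card_eq_sum_visits[where P = "cell (Zd n)"] cell_disjoint[OF keane_data_zdata])
  thus ?thesis using card_visits_eq_Zmat[OF nn w] by simp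
qed

lemma first_return_le:
  assumes "w \<in> A (nk k + N)"
  shows "first_return (G (nk k)) (A (nk k + N)) w \<le> CARD('a) * K"
proof -
  obtain c where "w \<in> cell (Zd (nk k + N)) c" using base_covered_by_cells[OF keane_data_zdata assms] by blast
  hence "first_return (G (nk k)) (A (nk k + N)) w = (\<Sum>b\<in>UNIV. Zmat s (nk k) (nk k + N) c b)"
    using first_return_eq_sum_Zmat by simp
  also have "\<dots> \<le> (\<Sum>b\<in>(UNIV::'a set). K)" by (rule sum_mono) (rule Z_le)
  finally show ?thesis by simp
qed

lemma first_return_ge:
  assumes "w \<in> A (nk k + N)"
  shows "CARD('a) \<le> first_return (G (nk k)) (A (nk k + N)) w"
proof -
  obtain c where "w \<in> cell (Zd (nk k + N)) c" using base_covered_by_cells[OF keane_data_zdata assms] by blast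
  hence "first_return (G (nk k)) (A (nk k + N)) w = (\<Sum>b\<in>UNIV. Zmat s (nk k) (nk k + N) c b)"
    using first_return_eq_sum_Zmat by simp
  also have "\<dots> \<ge> (\<Sum>b\<in>(UNIV::'a set). 1)" by (rule sum_mono) (rule Z_pos)
  finally show ?thesis by simp
qed

text \<open>Positivity of \<open>Z\<^sub>n\<^sub>k\<^sub>,\<^sub>n\<^sub>k\<^sub>+\<^sub>N\<close> means that every tower over a cell of the
  \<open>(n\<^sub>k + N)\<close>-th inducing interval passes through every cell of the \<open>n\<^sub>k\<close>-th one, and these towers
  have height at most \<open>d K\<close>; a point therefore comes back to its cell within two such towers.\<close>
lemma return_to_cell:
  assumes y: "y \<in> cell (Zd (nk k)) a"
  shows "\<exists>e. 1 \<le> e \<and> e \<le> 2 * (CARD('a) * K) \<and> (G (nk k) ^^ e) y \<in> cell (Zd (nk k)) a"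
proof -
  let ?n = "nk k" and ?n' = "nk k + N"
  let ?G = "G ?n" and ?A' = "A ?n'"
  have tower: "iet_tower (Zd ?n) (Zd ?n')" using tower_zdata_zdata by simp
  have yA: "y \<in> A ?n" using cell_subset_base[OF keane_data_zdata] y by blast
  obtain y' h where y': "y' \<in> ?A'" "h < first_return ?G ?A' y'" "(?G ^^ h) y' = y"
    using iet_towerD(4)[OF tower] yA unfolding tower_covers_def by blast
  let ?H = "first_return ?G ?A' y'"
  let ?z = "(?G ^^ ?H) y'"
  have z: "?z \<in> ?A'" using iet_towerD(2)[OF tower] y'(1) unfolding induced_def by auto
  obtain c where c: "?z \<in> cell (Zd ?n') c" using base_covered_by_cells[OF keane_data_zdata z] by blast
  have "card {i. i < first_return ?G ?A' ?z \<and> (?G ^^ i) ?z \<in> cell (Zd ?n) a} \<ge> 1"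
    using card_visits_eq_Zmat[OF _ c] Z_pos by simp
  then obtain l where l: "l < first_return ?G ?A' ?z" "(?G ^^ l) ?z \<in> cell (Zd ?n) a"
    by (metis (no_types, lifting) Collect_empty_eq card.empty not_one_le_zero)
  define e where "e = ?H - h + l"
  have "(?G ^^ e) y = (?G ^^ (e + h)) y'" using y'(3) by (simp add: funpow_add_apply)
  also have "e + h = l + ?H" unfolding e_def using y'(2) by simp
  finally have "(?G ^^ e) y \<in> cell (Zd ?n) a" using l(2) by (simp add: funpow_add_apply)
  moreover have "e \<le> ?H + first_return ?G ?A' ?z" unfolding e_def using l(1) by simp
  hence "e \<le> 2 * (CARD('a) * K)" using first_return_le[OF y'(1)] first_return_le[OF z] by simp
  moreover have "1 \<le> e" unfolding e_def using y'(2) by simp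
  ultimately show ?thesis by blast
qed

definition "returns_after q n \<longleftrightarrow> (\<forall>w\<in>A n. q \<le> first_return T (A n) w)"

lemma returns_after_mono:
  assumes "n \<le> n'" "returns_after q n"
  shows "returns_after q n'"
  unfolding returns_after_def
proof
  fix w assume w: "w \<in> A n'"
  have wA: "w \<in> A n" using base_zdata_antimono[OF assms(1)] w by blast
  have "returns_at T (A n') w (first_return T (A n') w)"
    using induced_zdata[of n'] w unfolding induced_def by blast
  hence "0 < first_return T (A n') w \<and> (T ^^ first_return T (A n') w) w \<in> A n"
    using base_zdata_antimono[OF assms(1)] unfolding returns_at_def by blast
  hence "first_return T (A n) w \<le> first_return T (A n') w"
    unfolding first_return_def[of T "A n"] by (rule Least_le)
  thus "q \<le> first_return T (A n') w" using assms(2) wA unfolding returns_after_def by force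
qed

text \<open>Every return to the \<open>(n\<^sub>k + N)\<close>-th inducing interval consists of at least \<open>d \<ge> 2\<close>
  returns to the \<open>n\<^sub>k\<close>-th one.\<close>
lemma returns_after_double:
  assumes "returns_after q (nk k)"
  shows "returns_after (2 * q) (nk k + N)"
  unfolding returns_after_def
proof
  let ?n = "nk k" and ?n' = "nk k + N"
  let ?G = "G ?n" and ?A = "A ?n" and ?A' = "A ?n'"
  fix w assume w: "w \<in> ?A'"
  have sub: "?A' \<subseteq> ?A" using base_zdata_antimono by simp
  have wA: "w \<in> ?A" using sub w by blast
  have two: "2 \<le> first_return ?G ?A' w" using first_return_ge[OF w] card_ge_2 by simp
  have "first_return T ?A' w = hit_time T ?A ?G w (first_return ?G ?A' w)"
    using first_return_nested[OF induced_zdata sub iet_towerD(2)[OF tower_zdata_zdata] w] by simp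
  also have "\<dots> \<ge> hit_time T ?A ?G w 2" using hit_time_mono[OF induced_zdata wA two] .
  finally have "first_return T ?A w + first_return T ?A (?G w) \<le> first_return T ?A' w"
    by (simp add: numeral_2_eq_2)
  moreover have "q \<le> first_return T ?A w" "q \<le> first_return T ?A (?G w)"
    using assms wA induced_funpow_in[OF induced_zdata wA, of 1] unfolding returns_after_def by simp_all
  ultimately show "2 * q \<le> first_return T ?A' w" by simp
qed

lemma returns_after_pow2: "\<exists>k. returns_after (2 ^ j) (nk k)"
proof (induction j)
  case 0
  have "returns_after 1 (nk 0)"
    unfolding returns_after_def using first_return_pos[OF induced_zdata] by (simp add: Suc_le_eq)
  thus ?case by auto
next
  case (Suc j)
  then obtain k where "returns_after (2 ^ j) (nk k)" by blast
  hence "returns_after (2 * 2 ^ j) (nk k + N)" by (rule returns_after_double)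
  hence "returns_after (2 ^ Suc j) (nk (k + N))"
    by (simp add: returns_after_mono[OF strict_mono_add_le[OF strict_mono_nk]])
  thus ?case by blast
qed

lemma bounded_birkhoff_sum:
  assumes x: "x \<in> base s" and q: "returns_after q (nk k)"
  shows "\<exists>m\<ge>q. \<bar>\<Sum>j<m. f ((T ^^ j) x)\<bar> \<le> real (2 * (CARD('a) * K)) * block_bound"
proof -
  let ?A = "A (nk k)" and ?G = "G (nk k)"
  have ind: "induced T ?A ?G" using induced_zdata .
  obtain y i where y: "y \<in> ?A" "i < first_return T ?A y" "(T ^^ i) y = x"
    using iet_towerD(4)[OF tower_zdata] x unfolding tower_covers_def by blast
  obtain a where a: "y \<in> cell (Zd (nk k)) a" using base_covered_by_cells[OF keane_data_zdata y(1)] by blast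
  obtain e where e: "1 \<le> e" "e \<le> 2 * (CARD('a) * K)" "(?G ^^ e) y \<in> cell (Zd (nk k)) a"
    using return_to_cell[OF a] by blast
  define m where "m = hit_time T ?A ?G y e"
  have "(T ^^ m) y = (?G ^^ e) y" unfolding m_def using funpow_hit_time[OF ind y(1)] .
  hence same: "same_itinerary T ?A (cell s) y ((T ^^ m) y)"
    using iet_towerD(3)[OF tower_zdata a] e(3) by simp
  have "(\<Sum>j<i. f ((T ^^ j) y)) = (\<Sum>j<i. f ((T ^^ j) ((T ^^ m) y)))"
    using sum_same_itinerary[where g = f and c = \<omega>, OF same f_on_cell] y(2) by simp
  hence "(\<Sum>j<m. f ((T ^^ j) x)) = (\<Sum>j<m. f ((T ^^ j) y))"
    using sum_funpow_shift[where g = f and F = T and i = i and y = y and m = m] y(3) by simp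
  also have "\<dots> = (\<Sum>l<e. \<Sum>j<first_return T ?A ((?G ^^ l) y). f ((T ^^ j) ((?G ^^ l) y)))"
    unfolding m_def by (rule sum_upto_hit_time[OF ind y(1)])
  finally have "\<bar>\<Sum>j<m. f ((T ^^ j) x)\<bar> \<le> (\<Sum>l<e. \<bar>\<Sum>j<first_return T ?A ((?G ^^ l) y). f ((T ^^ j) ((?G ^^ l) y))\<bar>)"
    by (simp add: sum_abs)
  also have "\<dots> \<le> real e * block_bound"
    using sum_bounded_above[of "{..<e}", OF block_sum_bound[OF induced_funpow_in[OF ind y(1)]]] by simp
  also have "\<dots> \<le> real (2 * (CARD('a) * K)) * block_bound"
    using e(2) block_bound_nonneg by (intro mult_right_mono) (simp only: of_nat_le_iff)+
  finally have bound: "\<bar>\<Sum>j<m. f ((T ^^ j) x)\<bar> \<le> real (2 * (CARD('a) * K)) * block_bound" .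
  have "first_return T ?A y \<le> m" unfolding m_def using hit_time_mono[OF ind y(1) e(1)] by simp
  hence "q \<le> m" using q y(1) unfolding returns_after_def by force
  thus ?thesis using bound by blast
qed

lemma bounded_birkhoff_sum_unbounded:
  assumes "x \<in> base s"
  shows "\<exists>m\<ge>l. \<bar>\<Sum>j<m. f ((T ^^ j) x)\<bar> \<le> real (2 * (CARD('a) * K)) * block_bound"
proof -
  obtain k where "returns_after (2 ^ l) (nk k)" using returns_after_pow2 by blast
  moreover have "l \<le> 2 ^ l" using less_exp[of l] by simp
  ultimately show ?thesis using bounded_birkhoff_sum[OF assms] by (meson order_trans)
qed

end

lemma BC_condition_imp_bc_setting:
  assumes "BC_condition (pt, pb, lam)" "\<omega> \<in> E_cs (pt, pb, lam)"
  shows "\<exists>nk N K V. bc_setting pt pb lam \<omega> nk N K V"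
proof -
  obtain nk :: "nat \<Rightarrow> nat" and N K :: nat and V :: real
    where "valid_iet pt pb lam" "keane pt pb lam" "inf_complete (pt, pb, lam)" "strict_mono nk"
      "\<forall>k a b. 1 \<le> Zmat (pt, pb, lam) (nk k) (nk k + N) a b \<and> Zmat (pt, pb, lam) (nk k) (nk k + N) a b \<le> K"
      "V > 0" "\<forall>k. \<forall>v\<in>E_cs (pt, pb, lam). vnorm (matvec (Zmat (pt, pb, lam) 0 (nk k)) v) \<le> V * vnorm v"
    using assms(1) unfolding BC_condition_def prod.case by blast
  hence "bc_setting pt pb lam \<omega> nk N K V" using assms(2) by unfold_locales auto
  thus ?thesis by blast
qed

lemma iet_map_outside: "(\<And>a. x \<notin> subint pt lam a) \<Longrightarrow> iet_map pt pb lam x = x"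
  unfolding iet_map_def by simp

lemma f_iet_outside: "(\<And>a. x \<notin> subint pt lam a) \<Longrightarrow> f_iet pt lam \<omega> x = 0"
  unfolding f_iet_def by simp

lemma birkhoff_of_nat: "birkhoff pt pb lam g (int m) x = (\<Sum>j<m. g ((iet_map pt pb lam ^^ j) x))"
  unfolding birkhoff_def by simp

lemma (in bc_setting) bounded_birkhoff_along_unbounded_times:
  assumes "0 \<le> x" "x \<le> 1"
  shows "\<exists>M C. (\<forall>l. l \<le> M l) \<and> (\<forall>l. \<bar>birkhoff pt pb lam f (int (M l)) x\<bar> \<le> C)"
proof (cases "x = 1")
  case True
  \<comment> \<open>\<open>1\<close> lies outside \<open>[0, 1)\<close>, where \<open>T\<^sub>0\<close> is the identity and \<open>f\<close> vanishes\<close>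
  have out: "1 \<notin> subint pt lam a" for a
  proof -
    have "subint pt lam a \<subseteq> {0..<1}"
      using subint_subset[of lam pt a] valid unfolding valid_iet_def by (simp add: less_imp_le)
    thus ?thesis by auto
  qed
  have "(iet_map pt pb lam ^^ j) 1 = 1" for j
    by (induction j) (simp_all add: iet_map_outside out)
  hence "birkhoff pt pb lam f (int l) x = 0" for l
    using True by (simp add: birkhoff_of_nat f_iet_outside out)
  thus ?thesis by (intro exI[of _ "\<lambda>l. l"] exI[of _ 0]) simp
next
  case False
  hence "x \<in> base s" using assms base_s by simp
  hence "\<forall>l. \<exists>m\<ge>l. \<bar>birkhoff pt pb lam f (int m) x\<bar> \<le> real (2 * (CARD('a) * K)) * block_bound"
    using bounded_birkhoff_sum_unbounded unfolding birkhoff_of_nat T0_def by simp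
  thus ?thesis by metis
qed

lemma filterlim_abs_int_of_unbounded:
  fixes M :: "nat \<Rightarrow> nat"
  assumes "\<And>l. l \<le> M l"
  shows "filterlim (\<lambda>k::int. \<bar>int (M (nat \<bar>k\<bar>))\<bar>) at_top at_top"
    and "filterlim (\<lambda>k::int. \<bar>int (M (nat \<bar>k\<bar>))\<bar>) at_top at_bot"
proof -
  have ge: "\<bar>k\<bar> \<le> \<bar>int (M (nat \<bar>k\<bar>))\<bar>" for k :: int
    using assms[of "nat \<bar>k\<bar>"] by linarith
  show "filterlim (\<lambda>k::int. \<bar>int (M (nat \<bar>k\<bar>))\<bar>) at_top at_top"
    unfolding filterlim_at_top eventually_at_top_linorder
  proof (intro allI exI impI)
    fix Z n :: int assume "max Z 0 \<le> n"
    thus "Z \<le> \<bar>int (M (nat \<bar>n\<bar>))\<bar>" using ge[of n] by linarith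
  qed
  show "filterlim (\<lambda>k::int. \<bar>int (M (nat \<bar>k\<bar>))\<bar>) at_top at_bot"
    unfolding filterlim_at_top eventually_at_bot_linorder
  proof (intro allI exI impI)
    fix Z n :: int assume "n \<le> - \<bar>Z\<bar>"
    thus "Z \<le> \<bar>int (M (nat \<bar>n\<bar>))\<bar>" using ge[of n] by linarith
  qed
qed

theorem corollary4p3:
  fixes pt pb :: "'a::finite \<Rightarrow> nat" and lam :: "'a \<Rightarrow> real"
    and \<omega> :: "'a \<Rightarrow> real" and x :: real
  assumes "BC_condition (pt, pb, lam)"
    and "\<omega> \<in> E_cs (pt, pb, lam)"
    and "0 \<le> x" and "x \<le> 1"
  shows "\<exists>m :: int \<Rightarrow> int.
           filterlim (\<lambda>k. \<bar>m k\<bar>) at_top at_top \<and>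
           filterlim (\<lambda>k. \<bar>m k\<bar>) at_top at_bot \<and>
           (\<exists>C. \<forall>k. \<bar>birkhoff pt pb lam (f_iet pt lam \<omega>) (m k) x\<bar> \<le> C)"
proof -
  obtain nk N K V where "bc_setting pt pb lam \<omega> nk N K V"
    using BC_condition_imp_bc_setting[OF assms(1,2)] by blast
  then interpret bc_setting pt pb lam \<omega> nk N K V .
  obtain M C where M: "\<forall>l. l \<le> M l"
    and C: "\<forall>l. \<bar>birkhoff pt pb lam (f_iet pt lam \<omega>) (int (M l)) x\<bar> \<le> C"
    using bounded_birkhoff_along_unbounded_times[OF assms(3,4)] by blast
  show ?thesis
    using filterlim_abs_int_of_unbounded[of M] M C
    by (intro exI[of _ "\<lambda>k. int (M (nat \<bar>k\<bar>))"] conjI exI[of _ C]) auto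
qed

end
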